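(* Let $\Omega\subset\mathbb R^n$, $n\ge2$, be a bounded domain with $\partial\Omega$ of class $C^{2,\alpha}$, and $\Sigma$ a closed smooth submanifold of $\Omega$ of codimension at least $2$. Let $(M,g)=\mathbb H^\ell_{\mathbb K}$ ($\ell\ge2$, $\mathbb K\in\{\mathbb R,\mathbb C,\mathbb H\}$), normalized to have sectional curvatures in $[-4,-1]$, and let $a>0$ be such that all sectional curvatures of $M$ are $\le -a^2$. Let $\gamma$ be a unit speed geodesic, $\phi=(u,v)$ the coordinate system with $u=f_{-\gamma}$ described in the context, in which $g=du^2+Q_p(dv)$. Let $\varphi_0$ be a $\Sigma$-singular map into $\gamma$ and write $\varphi_0=\gamma\circ u_0$ with $u_0\colon\Omega\setminus\Sigma\to\mathbb R$. Then for every $v\in H^{\varphi_0}_{1,0}(\Omega;\mathbb R^{m-1})$, $$\int_\Omega Q_{\varphi_0}(v)\,|\nabla u_0|^2\le a^{-2}\int_\Omega Q_{\varphi_0}(\nabla v).$$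
   Context: $m=\dim_{\mathbb R}M$. Busemann function: $f_\gamma(p)=\lim_{t\to\infty}(\operatorname{dist}(p,\gamma(t))-t)$, $-\gamma(t)=\gamma(-t)$. The coordinate system $\phi=(u,v)$ is the analytic one in which the metric reads, for $\mathbb K=\mathbb R$: $du^2+e^{2u}\sum_{k=1}^{\ell-1}dv_k^2$; for $\mathbb K=\mathbb C$: $du^2+e^{4u}\big(dv_1+\sum_{k=1}^{\ell-1}(v_{2k}dv_{2k+1}-v_{2k+1}dv_{2k})\big)^2+e^{2u}\sum_{k=2}^{2\ell-1}dv_k^2$; for $\mathbb K=\mathbb H$: $du^2+e^{4u}\mathfrak S\big(dv_1+\sum_{k=1}^{\ell-1}(v_{4k}dv_{4k+1}-v_{4k+1}dv_{4k}-v_{4k+2}dv_{4k+3}+v_{4k+3}dv_{4k+2})\big)^2+e^{2u}\sum_{k=4}^{4\ell-1}dv_k^2$ ($\mathfrak S$ = sum over cyclic permutations of the indices $\{1,2,3\}$); $Q_p$ is the resulting positive quadratic form on $\mathbb R^{m-1}$, with $Q_{\varphi_0}(\xi)$ meaning $Q_{\varphi_0(x)}(\xi)$ and $Q_{\varphi_0}(\nabla v)=\sum_{k=1}^nQ_{\varphi_0(x)}(\partial_kv(x))$. A $\Sigma$-singular map into $\gamma$ is a harmonic map $\varphi_0\in C^\infty(\Omega\setminus\Sigma;M)\cap C^{2,\alpha}(\overline\Omega\setminus\Sigma;M)$ with $\varphi_0(\Omega\setminus\Sigma)\subset\gamma(\mathbb R)$, $\varphi_0(x)\to\gamma(+\infty)$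 (the ideal point determined by $\gamma$) as $x\to\Sigma$, and $\|d\varphi_0(x)\|^2\ge\delta\operatorname{dist}(x,\Sigma)^{-2}$ near $\Sigma$ for some $\delta>0$. The space $H^{\varphi_0}_{1,0}(\Omega;\mathbb R^{m-1})$ is the closure of $C^\infty_0(\Omega\setminus\Sigma;\mathbb R^{m-1})$ with respect to the norm $\|v\|_{\varphi_0}=\big(\int_\Omega\{|v|^2+Q_{\varphi_0}(\nabla v)\}\big)^{1/2}$ within the space of $v\in L^2(\Omega\setminus\Sigma;\mathbb R^{m-1})$ for which this norm is finite. *)

theory Defs
  imports "HOL-Analysis.Analysis"
begin

definition pd :: "'n::finite \<Rightarrow> (real^'n \<Rightarrow> real) \<Rightarrow> real^'n \<Rightarrow> real" where
  "pd i f x = deriv (\<lambda>t. f (x + t *\<^sub>R axis i 1)) 0"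

fun Ck :: "nat \<Rightarrow> (real^'n::finite) set \<Rightarrow> (real^'n \<Rightarrow> real) \<Rightarrow> bool" where
  "Ck 0 S f = continuous_on S f"
| "Ck (Suc k) S f = ((\<forall>x\<in>S. \<forall>i. (\<lambda>t. f (x + t *\<^sub>R axis i 1)) differentiable (at 0))
        \<and> (\<forall>i. Ck k S (pd i f)) \<and> continuous_on S f)"

definition Cinf :: "(real^'n::finite) set \<Rightarrow> (real^'n \<Rightarrow> real) \<Rightarrow> bool" where
  "Cinf S f \<longleftrightarrow> (\<forall>k. Ck k S f)"

definition holder_on :: "real \<Rightarrow> (real^'n::finite) set \<Rightarrow> (real^'n \<Rightarrow> real) \<Rightarrow> bool" where
  "holder_on \<alpha> S f \<longleftrightarrow> (\<exists>C. \<forall>x\<in>S. \<forall>y\<in>S. \<bar>f x - f y\<bar> \<le> C * dist x y powr \<alpha>)"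

definition C2alpha :: "real \<Rightarrow> (real^'n::finite) set \<Rightarrow> (real^'n \<Rightarrow> real) \<Rightarrow> bool" where
  "C2alpha \<alpha> U f \<longleftrightarrow> Ck 2 U f \<and> (\<forall>i j. holder_on \<alpha> U (pd i (pd j f)))"

definition C2alpha_closure :: "real \<Rightarrow> (real^'n::finite) set \<Rightarrow> (real^'n) set \<Rightarrow> (real^'n \<Rightarrow> real) \<Rightarrow> bool" where
  "C2alpha_closure \<alpha> \<Omega> \<Sigma> f \<longleftrightarrow>
     Ck 2 (\<Omega> - \<Sigma>) f \<and>
     (\<forall>D\<in>{f} \<union> range (\<lambda>i. pd i f) \<union> range (\<lambda>(i,j). pd i (pd j f)).
        \<exists>F. continuous_on (closure \<Omega> - \<Sigma>) F \<and> (\<forall>x\<in>\<Omega> - \<Sigma>. F x = D x)) \<and>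
     (\<forall>K. compact K \<and> K \<subseteq> closure \<Omega> - \<Sigma> \<longrightarrow>
        (\<forall>i j. holder_on \<alpha> (K \<inter> (\<Omega> - \<Sigma>)) (pd i (pd j f))))"

definition C2alpha_boundary :: "real \<Rightarrow> (real^'n::finite) set \<Rightarrow> bool" where
  "C2alpha_boundary \<alpha> \<Omega> \<longleftrightarrow>
     (\<forall>p\<in>frontier \<Omega>. \<exists>U (\<psi>::real^'n \<Rightarrow> real^'n) k0.
        open U \<and> p \<in> U \<and> inj_on \<psi> U \<and> open (\<psi> ` U) \<and>
        (\<forall>k. C2alpha \<alpha> U (\<lambda>x. \<psi> x $ k)) \<and>
        (\<forall>k. C2alpha \<alpha> (\<psi> ` U) (\<lambda>y. inv_into U \<psi> y $ k)) \<and>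
        \<psi> ` (U \<inter> \<Omega>) = \<psi> ` U \<inter> {y. y $ k0 > 0} \<and>
        \<psi> ` (U \<inter> frontier \<Omega>) = \<psi> ` U \<inter> {y. y $ k0 = 0})"

definition closed_smooth_submanifold_codim2 :: "(real^'n::finite) set \<Rightarrow> (real^'n) set \<Rightarrow> bool" where
  "closed_smooth_submanifold_codim2 \<Sigma> \<Omega> \<longleftrightarrow>
     compact \<Sigma> \<and> \<Sigma> \<subseteq> \<Omega> \<and>
     (\<forall>p\<in>\<Sigma>. \<exists>U (\<psi>::real^'n \<Rightarrow> real^'n) J.
        open U \<and> p \<in> U \<and> inj_on \<psi> U \<and> open (\<psi> ` U) \<and>
        (\<forall>k. Cinf U (\<lambda>x. \<psi> x $ k)) \<and>
        (\<forall>k. Cinf (\<psi> ` U) (\<lambda>y. inv_into U \<psi> y $ k)) \<and>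
        card J \<ge> 2 \<and>
        \<psi> ` (U \<inter> \<Sigma>) = \<psi> ` U \<inter> {y. \<forall>k\<in>J. y $ k = 0})"

text \<open>Points and tangent vectors of M are functions nat => real; coordinate 0 is u,
  coordinate k (1 <= k <= m-1) is v_k; coordinates >= m are unused.\<close>

datatype field = RR | CC | HH

fun dimK :: "field \<Rightarrow> nat" where
  "dimK RR = 1" | "dimK CC = 2" | "dimK HH = 4"

definition mdim :: "field \<Rightarrow> nat \<Rightarrow> nat" where
  "mdim K l = l * dimK K"

definition cyc :: "nat \<Rightarrow> nat \<Rightarrow> nat" where
  "cyc r i = ((i - 1) + (r - 1)) mod 3 + 1"

definition thetaC :: "nat \<Rightarrow> (nat \<Rightarrow> real) \<Rightarrow> (nat \<Rightarrow> real) \<Rightarrow> real" where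
  "thetaC l p \<xi> = \<xi> 1 + (\<Sum>k=1..l-1. p (2*k) * \<xi> (2*k+1) - p (2*k+1) * \<xi> (2*k))"

definition thetaH :: "nat \<Rightarrow> nat \<Rightarrow> (nat \<Rightarrow> real) \<Rightarrow> (nat \<Rightarrow> real) \<Rightarrow> real" where
  "thetaH l r p \<xi> = \<xi> (cyc r 1) + (\<Sum>k=1..l-1.
       p (4*k) * \<xi> (4*k + cyc r 1) - p (4*k + cyc r 1) * \<xi> (4*k)
     - p (4*k + cyc r 2) * \<xi> (4*k + cyc r 3) + p (4*k + cyc r 3) * \<xi> (4*k + cyc r 2))"

fun gmet :: "field \<Rightarrow> nat \<Rightarrow> (nat \<Rightarrow> real) \<Rightarrow> (nat \<Rightarrow> real) \<Rightarrow> (nat \<Rightarrow> real) \<Rightarrow> real" where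
  "gmet RR l p \<xi> \<eta> = \<xi> 0 * \<eta> 0 + exp (2 * p 0) * (\<Sum>k=1..l-1. \<xi> k * \<eta> k)"
| "gmet CC l p \<xi> \<eta> = \<xi> 0 * \<eta> 0 + exp (4 * p 0) * (thetaC l p \<xi> * thetaC l p \<eta>)
      + exp (2 * p 0) * (\<Sum>k=2..2*l-1. \<xi> k * \<eta> k)"
| "gmet HH l p \<xi> \<eta> = \<xi> 0 * \<eta> 0 + exp (4 * p 0) * (\<Sum>r=1..3. thetaH l r p \<xi> * thetaH l r p \<eta>)
      + exp (2 * p 0) * (\<Sum>k=4..4*l-1. \<xi> k * \<eta> k)"

text \<open>Q_p: the positive quadratic form on R^{m-1} (vectors indexed by 1..m-1) with g = du^2 + Q_p(dv).\<close>
definition Qf :: "field \<Rightarrow> nat \<Rightarrow> (nat \<Rightarrow> real) \<Rightarrow> (nat \<Rightarrow> real) \<Rightarrow> real" where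
  "Qf K l p \<zeta> = gmet K l p (\<zeta>(0 := 0)) (\<zeta>(0 := 0))"

definition evec :: "nat \<Rightarrow> nat \<Rightarrow> real" where
  "evec i = (\<lambda>k. if k = i then 1 else 0)"

definition gcomp :: "field \<Rightarrow> nat \<Rightarrow> (nat \<Rightarrow> real) \<Rightarrow> nat \<Rightarrow> nat \<Rightarrow> real" where
  "gcomp K l p i j = gmet K l p (evec i) (evec j)"

definition ginv :: "field \<Rightarrow> nat \<Rightarrow> (nat \<Rightarrow> real) \<Rightarrow> nat \<Rightarrow> nat \<Rightarrow> real" where
  "ginv K l p = (THE h. (\<forall>i<mdim K l. \<forall>k<mdim K l.
        (\<Sum>j<mdim K l. gcomp K l p i j * h j k) = (if i = k then 1 else 0)) \<and>
      (\<forall>i j. \<not> (i < mdim K l \<and> j < mdim K l) \<longrightarrow> h i j = 0))"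

definition pdM :: "nat \<Rightarrow> ((nat \<Rightarrow> real) \<Rightarrow> real) \<Rightarrow> (nat \<Rightarrow> real) \<Rightarrow> real" where
  "pdM i F p = deriv (\<lambda>t. F (p(i := t))) (p i)"

definition Chr :: "field \<Rightarrow> nat \<Rightarrow> nat \<Rightarrow> nat \<Rightarrow> nat \<Rightarrow> (nat \<Rightarrow> real) \<Rightarrow> real" where
  "Chr K l k i j p = (1/2) * (\<Sum>s<mdim K l. ginv K l p k s *
      (pdM i (\<lambda>q. gcomp K l q j s) p + pdM j (\<lambda>q. gcomp K l q i s) p - pdM s (\<lambda>q. gcomp K l q i j) p))"

text \<open>Riemann tensor R^l_{ijk}, with R(d_i,d_j)d_k = R^l_{ijk} d_l and
  R(X,Y) = nabla_X nabla_Y - nabla_Y nabla_X - nabla_[X,Y]\<close>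
definition Riem :: "field \<Rightarrow> nat \<Rightarrow> nat \<Rightarrow> nat \<Rightarrow> nat \<Rightarrow> nat \<Rightarrow> (nat \<Rightarrow> real) \<Rightarrow> real" where
  "Riem K l a i j k p = pdM i (Chr K l a j k) p - pdM j (Chr K l a i k) p
     + (\<Sum>s<mdim K l. Chr K l s j k p * Chr K l a i s p - Chr K l s i k p * Chr K l a j s p)"

definition RXYZ :: "field \<Rightarrow> nat \<Rightarrow> (nat \<Rightarrow> real) \<Rightarrow> (nat \<Rightarrow> real) \<Rightarrow> (nat \<Rightarrow> real) \<Rightarrow> (nat \<Rightarrow> real) \<Rightarrow> nat \<Rightarrow> real" where
  "RXYZ K l p X Y Z = (\<lambda>a. \<Sum>i<mdim K l. \<Sum>j<mdim K l. \<Sum>k<mdim K l.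
       X i * Y j * Z k * Riem K l a i j k p)"

definition sec :: "field \<Rightarrow> nat \<Rightarrow> (nat \<Rightarrow> real) \<Rightarrow> (nat \<Rightarrow> real) \<Rightarrow> (nat \<Rightarrow> real) \<Rightarrow> real" where
  "sec K l p X Y = gmet K l p (RXYZ K l p X Y Y) X /
      (gmet K l p X X * gmet K l p Y Y - (gmet K l p X Y)^2)"

definition in_coords :: "field \<Rightarrow> nat \<Rightarrow> (nat \<Rightarrow> real) \<Rightarrow> bool" where
  "in_coords K l p \<longleftrightarrow> (\<forall>k. k \<ge> mdim K l \<longrightarrow> p k = 0)"

definition in_Rm1 :: "field \<Rightarrow> nat \<Rightarrow> (nat \<Rightarrow> real) \<Rightarrow> bool" where
  "in_Rm1 K l \<zeta> \<longleftrightarrow> (\<forall>k. (k = 0 \<or> k \<ge> mdim K l) \<longrightarrow> \<zeta> k = 0)"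

text \<open>the geodesic gamma: the u-line through v = c; u = f_{-gamma}, gamma(t) has u = t\<close>
definition gam :: "(nat \<Rightarrow> real) \<Rightarrow> real \<Rightarrow> nat \<Rightarrow> real" where
  "gam c t = (\<lambda>k. if k = 0 then t else c k)"

definition dmap :: "'n::finite \<Rightarrow> (real^'n \<Rightarrow> nat \<Rightarrow> real) \<Rightarrow> real^'n \<Rightarrow> nat \<Rightarrow> real" where
  "dmap i \<phi> x = (\<lambda>k. pd i (\<lambda>y. \<phi> y k) x)"

definition harmonic_map :: "field \<Rightarrow> nat \<Rightarrow> (real^'n::finite) set \<Rightarrow> (real^'n \<Rightarrow> nat \<Rightarrow> real) \<Rightarrow> bool" where
  "harmonic_map K l S \<phi> \<longleftrightarrow>
     (\<forall>x\<in>S. in_coords K l (\<phi> x)) \<and>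
     (\<forall>k<mdim K l. Cinf S (\<lambda>y. \<phi> y k)) \<and>
     (\<forall>x\<in>S. \<forall>k<mdim K l.
        (\<Sum>\<alpha>\<in>UNIV. pd \<alpha> (pd \<alpha> (\<lambda>y. \<phi> y k)) x
           + (\<Sum>i<mdim K l. \<Sum>j<mdim K l. Chr K l k i j (\<phi> x) * dmap \<alpha> \<phi> x i * dmap \<alpha> \<phi> x j)) = 0)"

definition edens :: "field \<Rightarrow> nat \<Rightarrow> (real^'n::finite \<Rightarrow> nat \<Rightarrow> real) \<Rightarrow> real^'n \<Rightarrow> real" where
  "edens K l \<phi> x = (\<Sum>\<alpha>\<in>UNIV. gmet K l (\<phi> x) (dmap \<alpha> \<phi> x) (dmap \<alpha> \<phi> x))"

definition sqn :: "field \<Rightarrow> nat \<Rightarrow> (nat \<Rightarrow> real) \<Rightarrow> real" where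
  "sqn K l \<zeta> = (\<Sum>k=1..mdim K l - 1. (\<zeta> k)^2)"

definition Qgrad :: "field \<Rightarrow> nat \<Rightarrow> (real^'n::finite \<Rightarrow> nat \<Rightarrow> real) \<Rightarrow> (real^'n \<Rightarrow> 'n \<Rightarrow> nat \<Rightarrow> real) \<Rightarrow> real^'n \<Rightarrow> real" where
  "Qgrad K l \<phi> G x = (\<Sum>\<alpha>\<in>UNIV. Qf K l (\<phi> x) (G x \<alpha>))"

definition Cc_inf :: "field \<Rightarrow> nat \<Rightarrow> (real^'n::finite) set \<Rightarrow> (real^'n \<Rightarrow> nat \<Rightarrow> real) \<Rightarrow> bool" where
  "Cc_inf K l S w \<longleftrightarrow> (\<forall>x. in_Rm1 K l (w x)) \<and> (\<forall>k. Cinf UNIV (\<lambda>x. w x k)) \<and>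
     (\<exists>C. compact C \<and> C \<subseteq> S \<and> (\<forall>x. x \<notin> C \<longrightarrow> w x = (\<lambda>k. 0)))"

definition Cc_inf_scalar :: "(real^'n::finite) set \<Rightarrow> (real^'n \<Rightarrow> real) \<Rightarrow> bool" where
  "Cc_inf_scalar S \<psi> \<longleftrightarrow> Cinf UNIV \<psi> \<and> (\<exists>C. compact C \<and> C \<subseteq> S \<and> (\<forall>x. x \<notin> C \<longrightarrow> \<psi> x = 0))"

text \<open>G is the weak gradient of v on S: G x alpha k = d_alpha v_k (x)\<close>
definition weak_grad :: "(real^'n::finite) set \<Rightarrow> (real^'n \<Rightarrow> nat \<Rightarrow> real) \<Rightarrow> (real^'n \<Rightarrow> 'n \<Rightarrow> nat \<Rightarrow> real) \<Rightarrow> bool" where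
  "weak_grad S v G \<longleftrightarrow> (\<forall>\<psi> \<alpha> k. Cc_inf_scalar S \<psi> \<longrightarrow>
      integrable (lebesgue_on S) (\<lambda>x. v x k * pd \<alpha> \<psi> x) \<and>
      integrable (lebesgue_on S) (\<lambda>x. G x \<alpha> k * \<psi> x) \<and>
      (\<integral>x. v x k * pd \<alpha> \<psi> x \<partial>lebesgue_on S) = - (\<integral>x. G x \<alpha> k * \<psi> x \<partial>lebesgue_on S))"

definition H10 :: "field \<Rightarrow> nat \<Rightarrow> (real^'n::finite) set \<Rightarrow> (real^'n) set \<Rightarrow> (real^'n \<Rightarrow> nat \<Rightarrow> real)
     \<Rightarrow> (real^'n \<Rightarrow> nat \<Rightarrow> real) \<Rightarrow> (real^'n \<Rightarrow> 'n \<Rightarrow> nat \<Rightarrow> real) \<Rightarrow> bool" where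
  "H10 K l \<Omega> \<Sigma> \<phi> v G \<longleftrightarrow>
     (\<forall>x. in_Rm1 K l (v x)) \<and> (\<forall>x \<alpha>. in_Rm1 K l (G x \<alpha>)) \<and>
     (\<forall>k. (\<lambda>x. v x k) \<in> borel_measurable (lebesgue_on (\<Omega> - \<Sigma>))) \<and>
     (\<forall>\<alpha> k. (\<lambda>x. G x \<alpha> k) \<in> borel_measurable (lebesgue_on (\<Omega> - \<Sigma>))) \<and>
     weak_grad (\<Omega> - \<Sigma>) v G \<and>
     (\<integral>\<^sup>+x. ennreal (sqn K l (v x) + Qgrad K l \<phi> G x) \<partial>lebesgue_on (\<Omega> - \<Sigma>)) < \<infinity> \<and>
     (\<exists>w. (\<forall>j. Cc_inf K l (\<Omega> - \<Sigma>) (w j)) \<and>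
        (\<lambda>j. \<integral>\<^sup>+x. ennreal (sqn K l (\<lambda>k. w j x k - v x k)
              + Qgrad K l \<phi> (\<lambda>y \<alpha> k. pd \<alpha> (\<lambda>z. w j z k) y - G y \<alpha> k) x) \<partial>lebesgue_on (\<Omega> - \<Sigma>))
          \<longlonglongrightarrow> 0)"

definition sigma_singular :: "field \<Rightarrow> nat \<Rightarrow> real \<Rightarrow> (real^'n::finite) set \<Rightarrow> (real^'n) set
     \<Rightarrow> (nat \<Rightarrow> real) \<Rightarrow> (real^'n \<Rightarrow> real) \<Rightarrow> bool" where
  "sigma_singular K l \<alpha> \<Omega> \<Sigma> c u0 \<longleftrightarrow>
     (let \<phi> = (\<lambda>x. gam c (u0 x)) in
       harmonic_map K l (\<Omega> - \<Sigma>) \<phi> \<and>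
       (\<forall>k<mdim K l. C2alpha_closure \<alpha> \<Omega> \<Sigma> (\<lambda>x. \<phi> x k)) \<and>
       (\<forall>s\<in>\<Sigma>. filterlim u0 at_top (at s within (\<Omega> - \<Sigma>))) \<and>
       (\<exists>\<delta>>0. \<exists>r>0. \<forall>x\<in>\<Omega> - \<Sigma>. infdist x \<Sigma> < r \<longrightarrow>
           edens K l \<phi> x \<ge> \<delta> / (infdist x \<Sigma>)^2))"

end

(*
  Along the geodesic the form Q is a sum of squares of linear forms in the v-coordinates that do
  not depend on u, weighted by exp (2u) or exp (4u).  For a harmonic function u and a compactly
  supported f, the divergence of exp (lam u) f^2 grad u integrates to zero; by Young's inequality
  this gives the weighted Hardy inequality
    (lam/2)^2 * int exp (lam u) f^2 |grad u|^2 <= int exp (lam u) |grad f|^2,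
  and as every weight exponent is at least 2, summing over the squares yields
  int Q(v) |grad u0|^2 <= int Q(grad v) for smooth compactly supported v.  Truncating the weight
  and using monotone convergence extends this to the closure H^{phi0}_{1,0}.  The constant 1 is at
  most 1/a^2, because the plane spanned by d/du and a direction scaled by exp (2u) has sectional
  curvature -1.
*)
theory Submission
  imports Defs
begin

section \<open>The metric along the \<open>u\<close>-axis\<close>

lemma evec_apply: "evec i k = (if k = i then 1 else 0)"
  by (simp add: evec_def)

lemma sum_evec_mult: "finite A \<Longrightarrow> (\<Sum>i\<in>A. evec j i * f i) = (if j \<in> A then f j else (0::real))"
  by (simp add: evec_apply if_distrib[of "\<lambda>x. x * _"] sum.delta' cong: if_cong)

lemma sum_evec_evec:
  "finite A \<Longrightarrow> (\<Sum>k\<in>A. evec i k * evec j k) = (if i = j \<and> i \<in> A then 1 else (0::real))"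
  using sum_evec_mult[of A i "evec j"] by (simp add: evec_apply)

lemma dimK_pos: "dimK K \<ge> 1"
  by (cases K) auto

lemma dimK_less_mdim: "l \<ge> 2 \<Longrightarrow> dimK K < mdim K l"
proof -
  assume "l \<ge> 2"
  then have "2 * dimK K \<le> mdim K l"
    unfolding mdim_def by (rule mult_right_mono) simp
  then show ?thesis using dimK_pos[of K] by linarith
qed

lemma gam_apply_0 [simp]: "gam c t 0 = t"
  by (simp add: gam_def)

lemma gmet_commute: "gmet K l p \<xi> \<eta> = gmet K l p \<eta> \<xi>"
  by (cases K) (simp_all add: mult.commute)

lemma gcomp_commute: "gcomp K l p i j = gcomp K l p j i"
  unfolding gcomp_def by (rule gmet_commute)

lemma gcomp_0_left: "gcomp K l p 0 j = (if j = 0 then 1 else 0)"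
proof -
  have "thetaC l p (evec 0) = 0"
    unfolding thetaC_def by (simp add: evec_apply)
  moreover have "thetaH l r p (evec 0) = 0" for r
    unfolding thetaH_def cyc_def by (simp add: evec_apply)
  ultimately show ?thesis
    by (cases K) (simp_all add: gcomp_def evec_apply)
qed

lemma gcomp_0_right: "gcomp K l p i 0 = (if i = 0 then 1 else 0)"
  by (simp add: gcomp_commute[of K l p i] gcomp_0_left)

lemma Chr_commute: "Chr K l a i j p = Chr K l a j i p"
  unfolding Chr_def by (simp add: gcomp_commute[of K l _ i j] add.commute)

lemma Chr_0_0: "Chr K l a 0 0 p = 0"
  unfolding Chr_def pdM_def by (simp add: gcomp_0_left gcomp_0_right)

definition gdiag :: "field \<Rightarrow> nat \<Rightarrow> real \<Rightarrow> real" where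
  "gdiag K i r = (if i = 0 then 1 else if i < dimK K then exp (4 * r) else exp (2 * r))"

lemma gdiag_pos: "gdiag K i r > 0"
  by (simp add: gdiag_def)

lemma thetaC_u_axis: "thetaC l (gam (\<lambda>_. 0) r) \<xi> = \<xi> 1"
  by (simp add: thetaC_def gam_def)

lemma thetaH_u_axis: "j \<in> {1..3} \<Longrightarrow> thetaH l j (gam (\<lambda>_. 0) r) \<xi> = \<xi> j"
  by (auto simp: thetaH_def gam_def cyc_def)

lemma gcomp_u_axis:
  assumes "i < mdim K l" "j < mdim K l"
  shows "gcomp K l (gam (\<lambda>_. 0) r) i j = (if i = j then gdiag K i r else 0)"
proof (cases K)
  case RR
  then show ?thesis using assms
    by (simp add: gcomp_def sum_evec_evec) (auto simp: gdiag_def mdim_def gam_def evec_apply)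
next
  case CC
  then show ?thesis using assms
    by (simp add: gcomp_def sum_evec_evec thetaC_u_axis)
      (auto simp: gdiag_def mdim_def gam_def evec_apply)
next
  case HH
  have "(\<Sum>j'=1..3. thetaH l j' (gam (\<lambda>_. 0) r) (evec i) * thetaH l j' (gam (\<lambda>_. 0) r) (evec j))
     = (if i = j \<and> i \<in> {1..3} then 1 else 0)"
    by (simp add: thetaH_u_axis sum_evec_evec)
  then show ?thesis using assms HH
    by (simp add: gcomp_def sum_evec_evec) (auto simp: gdiag_def mdim_def gam_def evec_apply)
qed

lemma ginv_diagonal:
  assumes g: "\<And>i j. i < mdim K l \<Longrightarrow> j < mdim K l \<Longrightarrow> gcomp K l p i j = (if i = j then d i else 0)"
    and d: "\<And>i. i < mdim K l \<Longrightarrow> d i \<noteq> 0"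
  shows "ginv K l p = (\<lambda>i j. if i < mdim K l \<and> j < mdim K l \<and> i = j then 1 / d i else 0)"
    (is "_ = ?h")
  unfolding ginv_def
proof (rule the_equality)
  let ?m = "mdim K l"
  have row: "(\<Sum>j<?m. gcomp K l p i j * h j k) = d i * h i k" if "i < ?m" for i k h
    using that by (simp add: g if_distrib[of "\<lambda>x. x * _"] cong: if_cong)
  show "(\<forall>i<?m. \<forall>k<?m. (\<Sum>j<?m. gcomp K l p i j * ?h j k) = (if i = k then 1 else 0)) \<and>
      (\<forall>i j. \<not> (i < ?m \<and> j < ?m) \<longrightarrow> ?h i j = 0)"
  proof (intro conjI allI impI)
    fix i k assume "i < ?m" "k < ?m"
    then show "(\<Sum>j<?m. gcomp K l p i j * ?h j k) = (if i = k then 1 else 0)"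
      using row[of i ?h k] d[of i] d[of k] by simp
  qed auto
  fix h assume h: "(\<forall>i<?m. \<forall>k<?m. (\<Sum>j<?m. gcomp K l p i j * h j k) = (if i = k then 1 else 0)) \<and>
      (\<forall>i j. \<not> (i < ?m \<and> j < ?m) \<longrightarrow> h i j = 0)"
  show "h = ?h"
  proof (intro ext)
    fix i k
    show "h i k = ?h i k"
    proof (cases "i < ?m \<and> k < ?m")
      case True
      then have "d i * h i k = (if i = k then 1 else 0)" using h row by metis
      then show ?thesis using True d[of i] by (auto simp: field_simps)
    qed (use h in auto)
  qed
qed

lemma ginv_u_axis:
  "ginv K l (gam (\<lambda>_. 0) r) = (\<lambda>i j. if i < mdim K l \<and> j < mdim K l \<and> i = j then 1 / gdiag K i r else 0)"
  by (rule ginv_diagonal) (auto simp: gcomp_u_axis gdiag_pos[THEN less_imp_neq, symmetric])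

lemma has_real_derivative_gdiag:
  "(gdiag K i has_real_derivative
     (if i = 0 then 0 else if i < dimK K then 4 * exp (4 * r) else 2 * exp (2 * r))) (at r)"
  unfolding gdiag_def[abs_def] by (auto intro!: derivative_eq_intros)

lemma pdM_0_gcomp_u_axis:
  assumes "i < mdim K l" "j < mdim K l"
  shows "pdM 0 (\<lambda>q. gcomp K l q i j) (gam (\<lambda>_. 0) r) = (if i = j then deriv (gdiag K i) r else 0)"
proof -
  have "(gam (\<lambda>_. 0) r)(0 := t) = gam (\<lambda>_. 0) t" for t
    by (auto simp: gam_def)
  then show ?thesis
    using assms by (simp add: pdM_def gcomp_u_axis)
qed

lemma Chr_0_u_axis:
  assumes a: "a < mdim K l" and i: "i < mdim K l"
  shows "Chr K l a i 0 (gam (\<lambda>_. 0) r) = (if a = i then deriv (gdiag K i) r / (2 * gdiag K i r) else 0)"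
proof -
  let ?m = "mdim K l" and ?p = "gam (\<lambda>_. 0) r"
  have "Chr K l a i 0 ?p = 1/2 * (\<Sum>s<?m. if s = a then pdM 0 (\<lambda>q. gcomp K l q i a) ?p / gdiag K a r else 0)"
    unfolding Chr_def ginv_u_axis
    by (intro arg_cong[where f="\<lambda>x. 1/2 * x"] sum.cong) (auto simp: pdM_def gcomp_0_left gcomp_0_right a)
  also have "\<dots> = (if a = i then deriv (gdiag K i) r / (2 * gdiag K i r) else 0)"
    using a i by (simp add: pdM_0_gcomp_u_axis)
  finally show ?thesis .
qed

text \<open>Index \<open>dimK K\<close> is the first \<open>v\<close>-direction whose metric coefficient is \<open>exp (2 u)\<close>; we call it
  horizontal.\<close>

lemma Chr_horizontal_0_u_axis:
  assumes "l \<ge> 2" "a < mdim K l"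
  shows "Chr K l a (dimK K) 0 (gam (\<lambda>_. 0) r) = (if a = dimK K then 1 else 0)"
proof -
  have "deriv (gdiag K (dimK K)) r = 2 * exp (2 * r)" "gdiag K (dimK K) r = exp (2 * r)"
    using has_real_derivative_gdiag[THEN DERIV_imp_deriv, of K "dimK K"] dimK_pos[of K]
    by (simp_all add: gdiag_def)
  then show ?thesis
    using assms by (simp add: Chr_0_u_axis dimK_less_mdim)
qed

lemma Riem_horizontal_u_origin:
  assumes l: "l \<ge> 2"
  shows "Riem K l (dimK K) (dimK K) 0 0 (gam (\<lambda>_. 0) 0) = -1"
proof -
  let ?m = "mdim K l" and ?k = "dimK K" and ?p = "gam (\<lambda>_. 0) (0::real)"
  have k: "?k < ?m" using dimK_less_mdim[OF l] .
  have "?p(0 := t) = gam (\<lambda>_. 0) t" for t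
    by (auto simp: gam_def)
  then have "pdM 0 (Chr K l ?k ?k 0) ?p = 0"
    unfolding pdM_def using Chr_horizontal_0_u_axis[OF l k] by simp
  moreover have "pdM ?k (Chr K l ?k 0 0) ?p = 0"
    unfolding pdM_def Chr_0_0 by simp
  moreover have "(\<Sum>s<?m. Chr K l s 0 0 ?p * Chr K l ?k ?k s ?p - Chr K l s ?k 0 ?p * Chr K l ?k 0 s ?p)
     = (\<Sum>s<?m. if s = ?k then -1 else 0)"
    by (rule sum.cong)
      (auto simp: Chr_0_0 Chr_horizontal_0_u_axis[OF l] Chr_commute[of K l ?k 0])
  ultimately show ?thesis
    using k by (simp add: Riem_def)
qed

lemma RXYZ_evec:
  assumes "i < mdim K l" "j < mdim K l" "h < mdim K l"
  shows "RXYZ K l p (evec i) (evec j) (evec h) a = Riem K l a i j h p"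
proof -
  have "RXYZ K l p (evec i) (evec j) (evec h) a = (\<Sum>i'<mdim K l. evec i i' *
      (\<Sum>j'<mdim K l. evec j j' * (\<Sum>h'<mdim K l. evec h h' * Riem K l a i' j' h' p)))"
    by (simp add: RXYZ_def sum_distrib_left mult.assoc)
  then show ?thesis
    using assms by (simp add: sum_evec_mult)
qed

lemma gmet_horizontal_u_origin:
  assumes l: "l \<ge> 2"
  shows "gmet K l (gam (\<lambda>_. 0) 0) \<xi> (evec (dimK K)) = \<xi> (dimK K)"
proof -
  have A: "finite A \<Longrightarrow> (\<Sum>k\<in>A. \<xi> k * evec j k) = (if j \<in> A then \<xi> j else 0)" for A j
    using sum_evec_mult[of A j \<xi>] by (simp add: mult.commute)
  have "(\<Sum>r=1..3. thetaH l r (gam (\<lambda>_. 0) 0) \<xi> * thetaH l r (gam (\<lambda>_. 0) 0) (evec 4)) = 0"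
    by (rule sum.neutral) (auto simp: thetaH_u_axis evec_apply)
  then show ?thesis
    using l by (cases K) (simp_all add: A thetaC_u_axis, simp_all add: evec_apply)
qed

lemma gmet_evec_u_origin:
  assumes l: "l \<ge> 2"
  shows "gmet K l (gam (\<lambda>_. 0) 0) (evec (dimK K)) (evec (dimK K)) = 1"
    and "gmet K l (gam (\<lambda>_. 0) 0) (evec 0) (evec 0) = 1"
    and "gmet K l (gam (\<lambda>_. 0) 0) (evec (dimK K)) (evec 0) = 0"
  using gcomp_u_axis[OF dimK_less_mdim[OF l] dimK_less_mdim[OF l], where r=0]
    gcomp_0_left[of K l "gam (\<lambda>_. 0) 0" 0] gcomp_0_right[of K l "gam (\<lambda>_. 0) 0" "dimK K"] dimK_pos[of K]
  by (simp_all add: gcomp_def gdiag_def)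

lemma sec_horizontal_u_origin:
  assumes l: "l \<ge> 2"
  shows "sec K l (gam (\<lambda>_. 0) 0) (evec (dimK K)) (evec 0) = -1"
proof -
  have "RXYZ K l (gam (\<lambda>_. 0) 0) (evec (dimK K)) (evec 0) (evec 0) (dimK K) = -1"
    using dimK_less_mdim[OF l, of K] by (simp add: RXYZ_evec Riem_horizontal_u_origin[OF l])
  then show ?thesis
    by (simp add: sec_def gmet_evec_u_origin[OF l] gmet_horizontal_u_origin[OF l] evec_apply)
qed

lemma sec_bound_imp_sq_le_1:
  assumes l: "l \<ge> 2"
    and curv: "\<And>p X Y. in_coords K l p \<Longrightarrow> in_coords K l X \<Longrightarrow> in_coords K l Y \<Longrightarrow>
                 gmet K l p X X * gmet K l p Y Y - (gmet K l p X Y)^2 \<noteq> 0 \<Longrightarrow>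
                 sec K l p X Y \<le> - (a^2)"
  shows "a^2 \<le> 1"
proof -
  have "in_coords K l (gam (\<lambda>_. 0) 0)" "in_coords K l (evec (dimK K))" "in_coords K l (evec 0)"
    using dimK_less_mdim[OF l, of K] by (auto simp: in_coords_def gam_def evec_apply)
  then have "sec K l (gam (\<lambda>_. 0) 0) (evec (dimK K)) (evec 0) \<le> - (a^2)"
    by (rule curv) (simp add: gmet_evec_u_origin[OF l])
  then show ?thesis
    using sec_horizontal_u_origin[OF l] by simp
qed

section \<open>The form \<open>Q\<close> along the geodesic\<close>

lemma linear_eq_sum_evec:
  fixes L :: "(nat \<Rightarrow> real) \<Rightarrow> real"
  assumes add: "\<And>\<xi> \<eta>. L (\<lambda>k. \<xi> k + \<eta> k) = L \<xi> + L \<eta>"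
    and scale: "\<And>r \<xi>. L (\<lambda>k. r * \<xi> k) = r * L \<xi>"
    and local: "\<And>\<xi> \<xi>'. (\<And>k. k \<in> A \<Longrightarrow> \<xi> k = \<xi>' k) \<Longrightarrow> L \<xi> = L \<xi>'"
    and A: "finite A"
  shows "L \<xi> = (\<Sum>i\<in>A. L (evec i) * \<xi> i)"
proof -
  have L_sum: "L (\<lambda>k. \<Sum>i\<in>B. \<xi> i * evec i k) = (\<Sum>i\<in>B. L (evec i) * \<xi> i)" if "finite B" for B
    using that
  proof (induction B rule: finite_induct)
    case empty
    show ?case using scale[of 0 \<xi>] by simp
  next
    case (insert i B)
    then show ?case by (simp add: add scale mult.commute)
  qed
  have "L \<xi> = L (\<lambda>k. \<Sum>i\<in>A. \<xi> i * evec i k)"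
    by (rule local) (use A in \<open>simp add: evec_apply if_distrib[of "\<lambda>x. _ * x"] cong: if_cong\<close>)
  then show ?thesis using L_sum[OF A] by simp
qed

lemma thetaC_add: "thetaC l p (\<lambda>k. \<xi> k + \<eta> k) = thetaC l p \<xi> + thetaC l p \<eta>"
  by (simp add: thetaC_def algebra_simps flip: sum.distrib)

lemma thetaC_scale: "thetaC l p (\<lambda>k. r * \<xi> k) = r * thetaC l p \<xi>"
  by (simp add: thetaC_def algebra_simps sum_distrib_left)

lemma thetaH_add: "thetaH l r p (\<lambda>k. \<xi> k + \<eta> k) = thetaH l r p \<xi> + thetaH l r p \<eta>"
  by (simp add: thetaH_def algebra_simps flip: sum.distrib)

lemma thetaH_scale: "thetaH l r p (\<lambda>k. s * \<xi> k) = s * thetaH l r p \<xi>"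
  by (simp add: thetaH_def algebra_simps sum_distrib_left)

lemma cyc_bounds: "1 \<le> cyc r i" "cyc r i \<le> 3"
  by (simp_all add: cyc_def)

lemma thetaC_eq_sum_evec:
  "l \<ge> 1 \<Longrightarrow> thetaC l p \<xi> = (\<Sum>i\<in>{1..2*l-1}. thetaC l p (evec i) * \<xi> i)"
  by (rule linear_eq_sum_evec[OF thetaC_add thetaC_scale])
    (auto simp: thetaC_def intro!: sum.cong)

lemma thetaH_eq_sum_evec:
  "l \<ge> 1 \<Longrightarrow> thetaH l r p \<xi> = (\<Sum>i\<in>{1..4*l-1}. thetaH l r p (evec i) * \<xi> i)"
proof (rule linear_eq_sum_evec[OF thetaH_add thetaH_scale])
  fix \<xi> \<xi>' :: "nat \<Rightarrow> real"
  assume "l \<ge> 1" and eq: "\<And>k. k \<in> {1..4*l-1} \<Longrightarrow> \<xi> k = \<xi>' k"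
  then have "\<xi> (4*k + cyc r j) = \<xi>' (4*k + cyc r j)" "\<xi> (4*k) = \<xi>' (4*k)"
    if "k \<in> {1..l-1}" for k j
    using that cyc_bounds[of r j] by (auto intro!: eq)
  moreover have "\<xi> (cyc r 1) = \<xi>' (cyc r 1)"
    using \<open>l \<ge> 1\<close> cyc_bounds[of r 1] by (auto intro!: eq)
  ultimately show "thetaH l r p \<xi> = thetaH l r p \<xi>'"
    unfolding thetaH_def by (auto intro!: sum.cong arg_cong2[where f="(+)"])
qed simp

lemma thetaC_gam: "thetaC l (gam c t) = thetaC l (gam c 0)"
  by (auto simp: thetaC_def gam_def fun_eq_iff intro!: sum.cong)

lemma thetaH_gam: "thetaH l r (gam c t) = thetaH l r (gam c 0)"
  using cyc_bounds[of r] by (auto simp: thetaH_def gam_def fun_eq_iff intro!: sum.cong)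

definition qexp :: "field \<Rightarrow> nat \<Rightarrow> real" where
  "qexp K j = (if j < dimK K then 4 else 2)"

text \<open>Row \<open>j\<close> of the coefficient matrix: for \<open>j < dimK K\<close> the contact form \<open>\<theta>\<^sub>j\<close> (whose
  coefficients depend only on the fixed \<open>v\<close>-coordinates \<open>c\<close> of the geodesic), otherwise \<open>dv\<^sub>j\<close>.\<close>

definition qcoef :: "field \<Rightarrow> nat \<Rightarrow> (nat \<Rightarrow> real) \<Rightarrow> nat \<Rightarrow> nat \<Rightarrow> real" where
  "qcoef K l c j i = (if j < dimK K then (case K of CC \<Rightarrow> thetaC l (gam c 0) (evec i)
       | HH \<Rightarrow> thetaH l j (gam c 0) (evec i) | RR \<Rightarrow> 0) else evec j i)"

definition qlin :: "field \<Rightarrow> nat \<Rightarrow> (nat \<Rightarrow> real) \<Rightarrow> nat \<Rightarrow> (nat \<Rightarrow> real) \<Rightarrow> real" where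
  "qlin K l c j \<zeta> = (\<Sum>i\<in>{1..mdim K l - 1}. qcoef K l c j i * \<zeta> i)"

lemma qexp_ge_2: "qexp K j \<ge> 2"
  by (simp add: qexp_def)

lemma qlin_diff: "qlin K l c j (\<lambda>k. \<xi> k - \<eta> k) = qlin K l c j \<xi> - qlin K l c j \<eta>"
  by (simp add: qlin_def algebra_simps sum_subtractf)

lemma sum_mult_upd_0: "0 \<notin> A \<Longrightarrow> (\<Sum>i\<in>A. f i * (\<zeta>(0 := 0)) i) = (\<Sum>i\<in>A. f i * \<zeta> i)"
  by (rule sum.cong) auto

lemma Qf_gam_eq_sum:
  assumes l: "l \<ge> 2"
  shows "Qf K l (gam c t) \<zeta> = (\<Sum>j\<in>{1..mdim K l - 1}. exp (qexp K j * t) * (qlin K l c j \<zeta>)^2)"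
    (is "_ = sum ?G _")
proof -
  have coord: "qlin K l c j \<zeta> = \<zeta> j" if "dimK K \<le> j" "j \<in> {1..mdim K l - 1}" for j
    using that by (simp add: qlin_def qcoef_def sum_evec_mult)
  have horizontal: "sum ?G {dimK K..mdim K l - 1} = exp (2 * t) * (\<Sum>j\<in>{dimK K..mdim K l - 1}. (\<zeta> j)^2)"
    using dimK_pos[of K] by (simp add: sum_distrib_left qexp_def coord)
  have sq: "(\<Sum>k\<in>A. (\<zeta>(0 := 0)) k * (\<zeta>(0 := 0)) k) = (\<Sum>j\<in>A. (\<zeta> j)^2)" if "0 \<notin> A" for A
    using that by (intro sum.cong) (auto simp: power2_eq_square)
  show ?thesis
  proof (cases K)
    case RR
    have "Qf K l (gam c t) \<zeta> = exp (2 * t) * (\<Sum>j\<in>{1..l - 1}. (\<zeta> j)^2)"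
      by (simp add: RR Qf_def) (simp add: power2_eq_square)
    also have "\<dots> = sum ?G {1..mdim K l - 1}"
      using horizontal by (simp add: RR mdim_def)
    finally show ?thesis .
  next
    case CC
    have "thetaC l (gam c t) (\<zeta>(0 := 0)) = qlin K l c 1 \<zeta>"
      using l by (subst thetaC_gam, subst thetaC_eq_sum_evec)
        (simp_all add: CC qlin_def qcoef_def mdim_def mult.commute sum_mult_upd_0)
    then have "Qf K l (gam c t) \<zeta> = ?G 1 + exp (2 * t) * (\<Sum>j\<in>{2..2*l - 1}. (\<zeta> j)^2)"
      by (simp add: CC Qf_def sq qexp_def power2_eq_square)
    also have "\<dots> = sum ?G {1..mdim K l - 1}"
      using horizontal l sum.atLeast_Suc_atMost[of 1 "2*l-1" ?G]
      by (simp add: CC mdim_def numeral_2_eq_2)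
    finally show ?thesis .
  next
    case HH
    have "thetaH l r (gam c t) (\<zeta>(0 := 0)) = qlin K l c r \<zeta>" if "r \<in> {1..3}" for r
      using l that by (subst thetaH_gam, subst thetaH_eq_sum_evec)
        (simp_all add: HH qlin_def qcoef_def mdim_def mult.commute sum_mult_upd_0)
    then have "(\<Sum>r=1..3. exp (4 * t) * (thetaH l r (gam c t) (\<zeta>(0 := 0)))^2) = sum ?G {1..3}"
      by (intro sum.cong) (auto simp: HH qexp_def)
    then have "Qf K l (gam c t) \<zeta> = sum ?G {1..3} + exp (2 * t) * (\<Sum>j\<in>{4..4*l - 1}. (\<zeta> j)^2)"
      by (simp add: HH Qf_def sq sum_distrib_left power2_eq_square)
    also have "\<dots> = sum ?G {1..mdim K l - 1}"
    proof -
      have "{1..4*l-1} = {1..3} \<union> {4..4*l-1}" using l by auto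
      then show ?thesis
        using horizontal by (simp add: HH mdim_def mult.commute sum.union_disjoint)
    qed
    finally show ?thesis .
  qed
qed

lemma Qf_gam_nonneg: "l \<ge> 2 \<Longrightarrow> Qf K l (gam c t) \<zeta> \<ge> 0"
  by (simp add: Qf_gam_eq_sum sum_nonneg)

lemma square_add_le:
  fixes x y e :: real
  assumes "e > 0"
  shows "(x + y)^2 \<le> (1 + e) * x^2 + (1 + 1/e) * y^2"
proof -
  have "(1 + e) * x^2 + (1 + 1/e) * y^2 - (x + y)^2 = (e * x - y)^2 / e"
    using assms by (simp add: field_simps power2_eq_square)
  also have "\<dots> \<ge> 0" using assms by simp
  finally show ?thesis by simp
qed

lemma Qf_gam_le_split:
  assumes "l \<ge> 2" "e > 0"
  shows "Qf K l (gam c t) \<xi> \<le> (1 + e) * Qf K l (gam c t) \<eta> + (1 + 1/e) * Qf K l (gam c t) (\<lambda>k. \<xi> k - \<eta> k)"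
proof -
  have "Qf K l (gam c t) \<xi> = (\<Sum>j\<in>{1..mdim K l - 1}. exp (qexp K j * t) *
      (qlin K l c j \<eta> + qlin K l c j (\<lambda>k. \<xi> k - \<eta> k))^2)"
    using assms(1) by (simp add: Qf_gam_eq_sum qlin_diff)
  also have "\<dots> \<le> (\<Sum>j\<in>{1..mdim K l - 1}. exp (qexp K j * t) *
      ((1 + e) * (qlin K l c j \<eta>)^2 + (1 + 1/e) * (qlin K l c j (\<lambda>k. \<xi> k - \<eta> k))^2))"
    using assms(2) by (intro sum_mono mult_left_mono square_add_le) simp_all
  also have "\<dots> = (1 + e) * Qf K l (gam c t) \<eta> + (1 + 1/e) * Qf K l (gam c t) (\<lambda>k. \<xi> k - \<eta> k)"
    using assms(1) by (simp add: Qf_gam_eq_sum sum_distrib_left sum.distrib algebra_simps)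
  finally show ?thesis .
qed

definition Qbound :: "field \<Rightarrow> nat \<Rightarrow> (nat \<Rightarrow> real) \<Rightarrow> real \<Rightarrow> real" where
  "Qbound K l c t = (\<Sum>j\<in>{1..mdim K l - 1}. exp (qexp K j * t) * (\<Sum>i\<in>{1..mdim K l - 1}. (qcoef K l c j i)^2))"

lemma Qf_gam_le_Qbound:
  assumes "l \<ge> 2"
  shows "Qf K l (gam c t) \<zeta> \<le> Qbound K l c t * sqn K l \<zeta>"
proof -
  let ?A = "{1..mdim K l - 1}"
  have "Qf K l (gam c t) \<zeta> \<le> (\<Sum>j\<in>?A. exp (qexp K j * t) * ((\<Sum>i\<in>?A. (qcoef K l c j i)^2) * (\<Sum>i\<in>?A. (\<zeta> i)^2)))"
    unfolding Qf_gam_eq_sum[OF assms] qlin_def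
    by (intro sum_mono mult_left_mono Cauchy_Schwarz_ineq_sum) simp
  also have "\<dots> = Qbound K l c t * sqn K l \<zeta>"
    by (simp add: Qbound_def sqn_def sum_distrib_right mult.assoc)
  finally show ?thesis .
qed

lemma sqn_nonneg: "sqn K l \<zeta> \<ge> 0"
  by (simp add: sqn_def sum_nonneg)

lemma sqn_diff_commute: "sqn K l (\<lambda>k. \<xi> k - \<eta> k) = sqn K l (\<lambda>k. \<eta> k - \<xi> k)"
  by (simp add: sqn_def power2_commute)

lemma Qgrad_gam_nonneg: "l \<ge> 2 \<Longrightarrow> Qgrad K l (\<lambda>x. gam c (u x)) G x \<ge> 0"
  by (simp add: Qgrad_def Qf_gam_nonneg sum_nonneg)

lemma borel_measurable_Qf_gam:
  assumes "l \<ge> 2" "t \<in> borel_measurable M" "\<And>k. (\<lambda>x. \<zeta> x k) \<in> borel_measurable M"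
  shows "(\<lambda>x. Qf K l (gam c (t x)) (\<zeta> x)) \<in> borel_measurable M"
  unfolding Qf_gam_eq_sum[OF assms(1)] qlin_def using assms(2,3) by measurable

lemma borel_measurable_sqn [measurable]:
  "(\<And>k. (\<lambda>x. \<zeta> x k) \<in> borel_measurable M) \<Longrightarrow> (\<lambda>x. sqn K l (\<zeta> x)) \<in> borel_measurable M"
  unfolding sqn_def by measurable

lemma Qgrad_gam_le_split:
  assumes "l \<ge> 2" "e > 0"
  shows "Qgrad K l (\<lambda>x. gam c (u x)) H x \<le> (1 + e) * Qgrad K l (\<lambda>x. gam c (u x)) G x
    + (1 + 1/e) * Qgrad K l (\<lambda>x. gam c (u x)) (\<lambda>y i k. H y i k - G y i k) x"
proof -
  have "Qgrad K l (\<lambda>x. gam c (u x)) H x \<le> (\<Sum>i\<in>UNIV. (1 + e) * Qf K l (gam c (u x)) (G x i)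
      + (1 + 1/e) * Qf K l (gam c (u x)) (\<lambda>k. H x i k - G x i k))"
    unfolding Qgrad_def by (intro sum_mono Qf_gam_le_split assms)
  then show ?thesis
    by (simp add: Qgrad_def sum.distrib sum_distrib_left)
qed

lemma Qf_gam_truncated_le:
  assumes l: "l \<ge> 2" and e: "e > 0" and N: "N \<ge> 0" and M: "M \<ge> 0"
  shows "(if N * Qbound K l c t \<le> M then Qf K l (gam c t) \<xi> * N else 0)
    \<le> (1 + e) * (Qf K l (gam c t) \<eta> * N) + (1 + 1/e) * M * sqn K l (\<lambda>k. \<eta> k - \<xi> k)"
proof (cases "N * Qbound K l c t \<le> M")
  case True
  have "Qf K l (gam c t) \<xi> * N
      \<le> (1 + e) * (Qf K l (gam c t) \<eta> * N) + (1 + 1/e) * (Qf K l (gam c t) (\<lambda>k. \<xi> k - \<eta> k) * N)"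
    using mult_right_mono[OF Qf_gam_le_split[OF l e] N] by (simp add: algebra_simps)
  moreover have "Qf K l (gam c t) (\<lambda>k. \<xi> k - \<eta> k) * N \<le> M * sqn K l (\<lambda>k. \<eta> k - \<xi> k)"
  proof -
    have "Qf K l (gam c t) (\<lambda>k. \<xi> k - \<eta> k) \<le> Qbound K l c t * sqn K l (\<lambda>k. \<eta> k - \<xi> k)"
      using Qf_gam_le_Qbound[OF l, of K c t "\<lambda>k. \<xi> k - \<eta> k"] sqn_diff_commute[of K l \<xi> \<eta>] by simp
    from mult_right_mono[OF this N]
    have "Qf K l (gam c t) (\<lambda>k. \<xi> k - \<eta> k) * N \<le> (N * Qbound K l c t) * sqn K l (\<lambda>k. \<eta> k - \<xi> k)"
      by (simp add: ac_simps)
    also have "\<dots> \<le> M * sqn K l (\<lambda>k. \<eta> k - \<xi> k)"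
      using True by (intro mult_right_mono sqn_nonneg)
    finally show ?thesis .
  qed
  then have "(1 + 1/e) * (Qf K l (gam c t) (\<lambda>k. \<xi> k - \<eta> k) * N) \<le> (1 + 1/e) * (M * sqn K l (\<lambda>k. \<eta> k - \<xi> k))"
    using e by (intro mult_left_mono) auto
  ultimately show ?thesis
    using True by (simp add: mult.assoc)
next
  case False
  then show ?thesis
    using e N M Qf_gam_nonneg[OF l] sqn_nonneg by (simp add: add_nonneg_nonneg)
qed

section \<open>Partial derivatives and integrals on \<open>\<real>\<^sup>n\<close>\<close>

lemma Cinf_imp_Ck: "Cinf S f \<Longrightarrow> Ck k S f"
  by (simp add: Cinf_def)

lemma Ck_2_continuous:
  assumes "Ck 2 S u"
  shows "continuous_on S u" "continuous_on S (pd i u)" "continuous_on S (pd j (pd i u))"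
  using assms by (auto simp: numeral_2_eq_2)

lemma Ck_1_UNIV_continuous:
  assumes "Ck 1 UNIV f"
  shows "continuous_on S f" "continuous_on S (pd i f)"
  using assms by (auto intro: continuous_on_subset)

lemma line_has_derivative_pd:
  "(\<lambda>t. g (y + t *\<^sub>R axis i 1)) differentiable (at 0) \<Longrightarrow>
    ((\<lambda>t. g (y + t *\<^sub>R axis i 1)) has_real_derivative pd i g y) (at 0)"
  unfolding pd_def using DERIV_deriv_iff_real_differentiable by blast

lemma line_has_derivative_pd_at:
  fixes g :: "real^'n::finite \<Rightarrow> real"
  assumes "(\<lambda>t. g (x + z *\<^sub>R axis i 1 + t *\<^sub>R axis i 1)) differentiable (at 0)"
  shows "((\<lambda>t. g (x + t *\<^sub>R axis i 1)) has_real_derivative pd i g (x + z *\<^sub>R axis i 1)) (at z)"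
proof -
  let ?e = "axis i (1::real) :: real^'n"
  have "((\<lambda>t. g (x + z *\<^sub>R ?e + (t - z) *\<^sub>R ?e)) has_real_derivative pd i g (x + z *\<^sub>R ?e) * 1) (at z)"
    by (rule DERIV_chain2[where f="\<lambda>s. g (x + z *\<^sub>R ?e + s *\<^sub>R ?e)" and g="\<lambda>t. t - z"])
      (use line_has_derivative_pd[OF assms] in \<open>auto intro!: derivative_eq_intros\<close>)
  moreover have "x + z *\<^sub>R ?e + (t - z) *\<^sub>R ?e = x + t *\<^sub>R ?e" for t
    by (simp add: algebra_simps)
  ultimately show ?thesis by simp
qed

lemma pd_eqI:
  "((\<lambda>t. g (y + t *\<^sub>R axis i 1)) has_real_derivative D) (at 0) \<Longrightarrow> pd i g y = D"
  unfolding pd_def by (rule DERIV_imp_deriv)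

lemma line_has_derivative_0_outside:
  fixes g :: "'a::real_normed_vector \<Rightarrow> real"
  assumes C: "closed C" and y: "y \<notin> C" and g0: "\<And>x. x \<notin> C \<Longrightarrow> g x = 0"
  shows "((\<lambda>t. g (y + t *\<^sub>R e)) has_real_derivative 0) (at 0)"
proof (rule has_field_derivative_transform_within_open[OF DERIV_const])
  show "open ((\<lambda>t::real. y + t *\<^sub>R e) -` (- C))"
    using C by (rule open_vimage[OF open_Compl]) (intro continuous_intros)
qed (use y g0 in auto)

lemma pd_eq_0_outside:
  fixes g :: "real^'n::finite \<Rightarrow> real"
  assumes "closed C" "y \<notin> C" "\<And>x. x \<notin> C \<Longrightarrow> g x = 0"
  shows "pd i g y = 0"
  by (rule pd_eqI, rule line_has_derivative_0_outside[OF assms])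

lemma line_has_derivative_extend:
  fixes F G :: "'a::real_normed_vector \<Rightarrow> real"
  assumes S: "open S" and FG: "\<And>x. x \<in> S \<Longrightarrow> F x = G x" and y: "y \<in> S"
    and G: "((\<lambda>t. G (y + t *\<^sub>R e)) has_real_derivative D) (at 0)"
  shows "((\<lambda>t. F (y + t *\<^sub>R e)) has_real_derivative D) (at 0)"
proof (rule has_field_derivative_transform_within_open[OF G])
  show "open ((\<lambda>t::real. y + t *\<^sub>R e) -` S)"
    using S by (rule open_vimage) (intro continuous_intros)
qed (use y FG in auto)

lemma continuous_on_extend_by_zero:
  fixes F :: "'a::t2_space \<Rightarrow> 'b::{topological_space, zero}" and G
  assumes S: "open S" and C: "compact C" "C \<subseteq> S" and G: "continuous_on S G"
    and FG: "\<And>x. x \<in> S \<Longrightarrow> F x = G x" and F0: "\<And>x. x \<notin> C \<Longrightarrow> F x = 0"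
  shows "continuous_on UNIV F"
proof -
  have "continuous_on (S \<union> - C) F"
  proof (rule continuous_on_open_Un)
    show "continuous_on S F" using G FG by (metis continuous_on_cong)
    show "continuous_on (- C) F" using F0 continuous_on_const[of "- C" 0]
      by (metis ComplD continuous_on_cong)
  qed (use S C in \<open>auto simp: compact_imp_closed open_Compl\<close>)
  moreover have "S \<union> - C = UNIV" using C by auto
  ultimately show ?thesis by simp
qed

lemma integrable_continuous_compact_support:
  fixes g :: "'a::euclidean_space \<Rightarrow> real"
  assumes cont: "continuous_on UNIV g" and C: "compact C" and supp: "\<And>x. x \<notin> C \<Longrightarrow> g x = 0"
  shows "integrable lborel g"
proof -
  obtain B where B: "\<And>x. x \<in> C \<Longrightarrow> norm (g x) \<le> B"
    using continuous_on_compact_bound[OF C continuous_on_subset[OF cont]] by blast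
  have "integrable lborel (\<lambda>x. B * indicator C x :: real)"
    using C by (intro integrable_mult_right integrable_real_indicator emeasure_bounded_finite)
      (auto simp: compact_imp_bounded compact_imp_closed)
  moreover have "g \<in> borel_measurable lborel"
    using cont by (simp add: borel_measurable_continuous_onI)
  moreover have "AE x in lborel. norm (g x) \<le> norm (B * indicator C x :: real)"
    using B by (auto simp: indicator_def supp intro: order_trans[OF _ abs_ge_self])
  ultimately show ?thesis
    by (rule Bochner_Integration.integrable_bound)
qed

lemma lborel_integral_translate:
  fixes f :: "'a::euclidean_space \<Rightarrow> real"
  assumes "f \<in> borel_measurable borel"
  shows "integrable lborel (\<lambda>x. f (x + c)) = integrable lborel f"
    and "integral\<^sup>L lborel (\<lambda>x. f (x + c)) = integral\<^sup>L lborel f"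
proof -
  have "integrable lborel f = integrable (distr lborel borel ((+) c)) f"
    by (simp add: lborel_distr_plus)
  also have "\<dots> = integrable lborel (\<lambda>x. f (x + c))"
    using assms by (subst integrable_distr_eq) (auto simp: add.commute)
  finally show "integrable lborel (\<lambda>x. f (x + c)) = integrable lborel f" ..
  have "integral\<^sup>L lborel f = integral\<^sup>L (distr lborel borel ((+) c)) f"
    by (simp add: lborel_distr_plus)
  also have "\<dots> = integral\<^sup>L lborel (\<lambda>x. f (x + c))"
    using assms by (subst integral_distr) (auto simp: add.commute)
  finally show "integral\<^sup>L lborel (\<lambda>x. f (x + c)) = integral\<^sup>L lborel f" ..
qed

lemma nn_integral_lebesgue_on_eq_lborel_integral:
  fixes F G :: "'a::euclidean_space \<Rightarrow> real"
  assumes S: "open S" and FG: "\<And>x. x \<in> S \<Longrightarrow> F x = G x" and F0: "\<And>x. x \<notin> S \<Longrightarrow> F x = 0"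
    and nonneg: "\<And>x. F x \<ge> 0" and int: "integrable lborel F"
  shows "(\<integral>\<^sup>+x. ennreal (G x) \<partial>lebesgue_on S) = ennreal (integral\<^sup>L lborel F)"
proof -
  have "(\<integral>\<^sup>+x. ennreal (G x) \<partial>lebesgue_on S) = (\<integral>\<^sup>+x. ennreal (G x) * indicator S x \<partial>lebesgue)"
    using S by (intro nn_integral_restrict_space) simp
  also have "\<dots> = (\<integral>\<^sup>+x. ennreal (G x) * indicator S x \<partial>lborel)"
    by (rule nn_integral_completion)
  also have "\<dots> = (\<integral>\<^sup>+x. ennreal (F x) \<partial>lborel)"
    by (rule nn_integral_cong) (auto simp: FG F0 indicator_def)
  also have "\<dots> = ennreal (integral\<^sup>L lborel F)"
    using int nonneg by (intro nn_integral_eq_integral) auto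
  finally show ?thesis .
qed

lemma line_difference_le:
  fixes \<psi> :: "real^'n::finite \<Rightarrow> real"
  assumes diff: "\<And>y. (\<lambda>t. \<psi> (y + t *\<^sub>R axis i 1)) differentiable (at 0)"
    and B: "\<And>y. \<bar>pd i \<psi> y\<bar> \<le> B" and h: "h > 0"
  shows "\<bar>\<psi> (x + h *\<^sub>R axis i 1) - \<psi> x\<bar> \<le> B * h"
proof -
  have "((\<lambda>t. \<psi> (x + t *\<^sub>R axis i 1)) has_real_derivative pd i \<psi> (x + z *\<^sub>R axis i 1)) (at z)" for z
    by (rule line_has_derivative_pd_at[OF diff])
  then obtain z
    where "\<psi> (x + h *\<^sub>R axis i 1) - \<psi> (x + 0 *\<^sub>R axis i 1) = (h - 0) * pd i \<psi> (x + z *\<^sub>R axis i 1)"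
    using MVT2[OF h, of "\<lambda>t. \<psi> (x + t *\<^sub>R axis i 1)" "\<lambda>z. pd i \<psi> (x + z *\<^sub>R axis i 1)"] by blast
  then show ?thesis
    using B[of "x + z *\<^sub>R axis i 1"] h by (simp add: abs_mult mult.commute mult_left_mono)
qed

lemma difference_quotient_le_indicator:
  fixes \<psi> :: "real^'n::finite \<Rightarrow> real"
  assumes diff: "\<And>y. (\<lambda>t. \<psi> (y + t *\<^sub>R axis i 1)) differentiable (at 0)"
    and B: "\<And>y. \<bar>pd i \<psi> y\<bar> \<le> B" and R: "\<And>x. \<psi> x \<noteq> 0 \<Longrightarrow> norm x \<le> R"
    and h: "0 < h" "h \<le> 1"
  shows "\<bar>(\<psi> (x + h *\<^sub>R axis i 1) - \<psi> x) / h\<bar> \<le> B * indicator (cball 0 (R + 1)) x"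
proof (cases "norm x \<le> R + 1")
  case True
  have "\<bar>(\<psi> (x + h *\<^sub>R axis i 1) - \<psi> x) / h\<bar> = \<bar>\<psi> (x + h *\<^sub>R axis i 1) - \<psi> x\<bar> / h"
    using h by simp
  also have "\<dots> \<le> B * h / h"
    using line_difference_le[OF diff B h(1), of x] h by (intro divide_right_mono) simp_all
  finally have "\<bar>(\<psi> (x + h *\<^sub>R axis i 1) - \<psi> x) / h\<bar> \<le> B * h / h" .
  then show ?thesis
    using True h by simp
next
  case False
  have "norm x \<le> norm (x + h *\<^sub>R axis i 1) + norm (h *\<^sub>R axis i (1::real))"
    using norm_triangle_ineq[of "x + h *\<^sub>R axis i 1" "- (h *\<^sub>R axis i 1)"] by simp
  then have "\<psi> x = 0" "\<psi> (x + h *\<^sub>R axis i 1) = 0"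
    using False h R[of x] R[of "x + h *\<^sub>R axis i 1"] by force+
  then show ?thesis
    using False by simp
qed

lemma integral_pd_eq_0:
  fixes \<psi> :: "real^'n::finite \<Rightarrow> real"
  assumes diff: "\<And>y. (\<lambda>t. \<psi> (y + t *\<^sub>R axis i 1)) differentiable (at 0)"
    and cont: "continuous_on UNIV \<psi>" and cont_pd: "continuous_on UNIV (pd i \<psi>)"
    and C: "compact C" and supp: "\<And>x. x \<notin> C \<Longrightarrow> \<psi> x = 0"
  shows "integral\<^sup>L lborel (pd i \<psi>) = 0"
proof -
  let ?e = "axis i (1::real) :: real^'n"
  have pd0: "pd i \<psi> x = 0" if "x \<notin> C" for x
    using C that supp by (intro pd_eq_0_outside) (auto simp: compact_imp_closed)
  obtain B where B: "\<And>x. x \<in> C \<Longrightarrow> norm (pd i \<psi> x) \<le> B"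
    using continuous_on_compact_bound[OF C continuous_on_subset[OF cont_pd]] by blast
  have B': "\<bar>pd i \<psi> x\<bar> \<le> max B 0" for x
    using B[of x] pd0[of x] by (cases "x \<in> C") auto
  obtain R where R: "\<And>x. x \<in> C \<Longrightarrow> norm x \<le> R"
    using compact_imp_bounded[OF C] by (auto simp: bounded_iff)
  define h :: "nat \<Rightarrow> real" where "h k = 1 / (real k + 1)" for k
  have h: "h k > 0" "h k \<le> 1" for k
    by (simp_all add: h_def field_simps)
  define s where "s k x = (\<psi> (x + h k *\<^sub>R ?e) - \<psi> x) / h k" for k x
  have [measurable]: "\<psi> \<in> borel_measurable borel" "pd i \<psi> \<in> borel_measurable borel"
    using cont cont_pd by (simp_all add: borel_measurable_continuous_onI)
  have s_integral: "integral\<^sup>L lborel (s k) = 0" for k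
    using integrable_continuous_compact_support[OF cont C supp] lborel_integral_translate[of \<psi> "h k *\<^sub>R ?e"]
    by (simp add: s_def[abs_def])
  have s_lim: "(\<lambda>k. s k x) \<longlonglongrightarrow> pd i \<psi> x" for x
  proof -
    have "((\<lambda>t. (\<psi> (x + t *\<^sub>R ?e) - \<psi> x) / t) \<longlongrightarrow> pd i \<psi> x) (at 0)"
      using line_has_derivative_pd[OF diff] by (simp add: has_field_derivative_iff)
    moreover have "h \<longlonglongrightarrow> 0"
      unfolding h_def using LIMSEQ_inverse_real_of_nat by (simp add: inverse_eq_divide add.commute)
    then have "filterlim h (at 0) sequentially"
      using h(1) by (auto simp: filterlim_at less_imp_neq[symmetric])
    ultimately show ?thesis
      unfolding s_def by (rule filterlim_compose)
  qed
  have s_bound: "\<bar>s k x\<bar> \<le> max B 0 * indicator (cball 0 (R + 1)) x" for k x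
    unfolding s_def using supp R by (intro difference_quotient_le_indicator[OF diff B' _ h]) blast
  have s_meas: "s k \<in> borel_measurable lborel" for k
    unfolding s_def[abs_def] by measurable
  have w_int: "integrable lborel (\<lambda>x. max B 0 * indicator (cball 0 (R + 1)) x :: real)"
    by (intro integrable_mult_right integrable_real_indicator emeasure_bounded_finite) auto
  have "(\<lambda>k. integral\<^sup>L lborel (s k)) \<longlonglongrightarrow> integral\<^sup>L lborel (pd i \<psi>)"
    by (rule integral_dominated_convergence[OF _ s_meas w_int]) (simp_all add: s_lim s_bound)
  then show ?thesis
    by (simp add: s_integral LIMSEQ_const_iff)
qed

lemma integral_pd_extend_by_zero:
  fixes G D :: "real^'n::finite \<Rightarrow> real"
  assumes S: "open S" and C: "compact C" "C \<subseteq> S"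
    and G: "\<And>y. y \<in> S \<Longrightarrow> ((\<lambda>t. G (y + t *\<^sub>R axis i 1)) has_real_derivative D y) (at 0)"
    and cont_G: "continuous_on S G" and cont_D: "continuous_on S D"
    and supp: "\<And>y. y \<notin> C \<Longrightarrow> G y = 0"
  shows "integrable lborel (\<lambda>y. if y \<in> S then D y else 0)"
    and "integral\<^sup>L lborel (\<lambda>y. if y \<in> S then D y else 0) = 0"
proof -
  define F where "F y = (if y \<in> S then G y else 0)" for y
  have Cc: "closed C"
    using C by (simp add: compact_imp_closed)
  have F0: "F y = 0" if "y \<notin> C" for y
    using that by (simp add: F_def supp)
  have dF: "((\<lambda>t. F (y + t *\<^sub>R axis i 1)) has_real_derivative (if y \<in> S then D y else 0)) (at 0)" for y
  proof (cases "y \<in> S")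
    case True
    then show ?thesis
      using line_has_derivative_extend[OF S _ True G[OF True], of F] by (simp add: F_def)
  next
    case False
    then show ?thesis
      using C line_has_derivative_0_outside[where g=F, OF Cc _ F0] by auto
  qed
  have pd_F: "pd i F y = (if y \<in> S then D y else 0)" for y
    using dF by (rule pd_eqI)
  have D0: "(if y \<in> S then D y else 0) = 0" if "y \<notin> C" for y
    using pd_F[of y] pd_eq_0_outside[OF Cc that F0] by simp
  have cont_pd_F: "continuous_on UNIV (pd i F)"
    using D0 by (intro continuous_on_extend_by_zero[OF S C cont_D]) (auto simp: pd_F)
  then show "integrable lborel (\<lambda>y. if y \<in> S then D y else 0)"
    using D0 integrable_continuous_compact_support[OF _ C(1)] by (auto simp: pd_F[abs_def])
  have "integral\<^sup>L lborel (pd i F) = 0"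
  proof (rule integral_pd_eq_0[OF _ _ cont_pd_F C(1) F0])
    show "(\<lambda>t. F (y + t *\<^sub>R axis i 1)) differentiable (at 0)" for y
      using dF real_differentiable_def by blast
    show "continuous_on UNIV F"
      by (rule continuous_on_extend_by_zero[OF S C cont_G]) (simp_all add: F_def supp)
  qed
  then show "integral\<^sup>L lborel (\<lambda>y. if y \<in> S then D y else 0) = 0"
    by (simp add: pd_F[abs_def])
qed

section \<open>A weighted Hardy inequality for harmonic functions\<close>

definition laplacian :: "(real^'n::finite \<Rightarrow> real) \<Rightarrow> real^'n \<Rightarrow> real" where
  "laplacian u x = (\<Sum>\<alpha>\<in>UNIV. pd \<alpha> (pd \<alpha> u) x)"

lemma sum_young_lower_bound:
  fixes a b c :: "'i \<Rightarrow> real"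
  assumes lam: "lam > 0" and E: "E \<ge> 0" and b: "sum b A = 0"
  shows "E * (lam / 2 * f^2 * (\<Sum>i\<in>A. (a i)^2) - 2 / lam * (\<Sum>i\<in>A. (c i)^2))
    \<le> (\<Sum>i\<in>A. E * (lam * (a i)^2 * f^2 + b i * f^2 + 2 * a i * f * c i))"
proof -
  have "E * (lam / 2 * f^2 * (a i)^2 - 2 / lam * (c i)^2 + b i * f^2)
      \<le> E * (lam * (a i)^2 * f^2 + b i * f^2 + 2 * a i * f * c i)" for i
  proof -
    have "0 \<le> (lam * a i * f + 2 * c i)^2 / (2 * lam)"
      using lam by simp
    also have "\<dots> = lam * (a i)^2 * f^2 + 2 * a i * f * c i - (lam / 2 * f^2 * (a i)^2 - 2 / lam * (c i)^2)"
      using lam by (simp add: field_simps power2_eq_square)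
    finally show ?thesis
      using E lam by (intro mult_left_mono) (simp_all add: field_simps)
  qed
  then have "(\<Sum>i\<in>A. E * (lam / 2 * f^2 * (a i)^2 - 2 / lam * (c i)^2 + b i * f^2))
      \<le> (\<Sum>i\<in>A. E * (lam * (a i)^2 * f^2 + b i * f^2 + 2 * a i * f * c i))"
    by (rule sum_mono)
  moreover have "(\<Sum>i\<in>A. E * (lam / 2 * f^2 * (a i)^2 - 2 / lam * (c i)^2 + b i * f^2))
      = E * (lam / 2 * f^2 * (\<Sum>i\<in>A. (a i)^2) - 2 / lam * (\<Sum>i\<in>A. (c i)^2) + f^2 * sum b A)"
    by (simp add: sum_distrib_left sum_distrib_right sum_divide_distrib sum.distrib sum_subtractf
        algebra_simps)
  ultimately show ?thesis
    using b by simp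
qed

lemma hardy_integrand_le_divergence:
  fixes u f :: "real^'n::finite \<Rightarrow> real"
  assumes lam: "lam > 0" and harm: "laplacian u y = 0"
  shows "lam / 2 * (exp (lam * u y) * (f y)^2 * (\<Sum>i\<in>UNIV. (pd i u y)^2))
      - 2 / lam * (exp (lam * u y) * (\<Sum>i\<in>UNIV. (pd i f y)^2))
    \<le> exp (lam * u y) * (\<Sum>i\<in>UNIV. lam * (pd i u y)^2 * (f y)^2
      + pd i (pd i u) y * (f y)^2 + 2 * pd i u y * f y * pd i f y)"
proof -
  have "(\<Sum>i\<in>UNIV. pd i (pd i u) y) = 0"
    using harm by (simp add: laplacian_def)
  have "lam / 2 * (exp (lam * u y) * (f y)^2 * (\<Sum>i\<in>UNIV. (pd i u y)^2))
      - 2 / lam * (exp (lam * u y) * (\<Sum>i\<in>UNIV. (pd i f y)^2))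
    = exp (lam * u y) * (lam / 2 * (f y)^2 * (\<Sum>i\<in>UNIV. (pd i u y)^2) - 2 / lam * (\<Sum>i\<in>UNIV. (pd i f y)^2))"
    by (simp add: algebra_simps)
  also have "\<dots> \<le> (\<Sum>i\<in>UNIV. exp (lam * u y) * (lam * (pd i u y)^2 * (f y)^2
      + pd i (pd i u) y * (f y)^2 + 2 * pd i u y * f y * pd i f y))"
    by (rule sum_young_lower_bound[OF lam exp_ge_zero \<open>(\<Sum>i\<in>UNIV. pd i (pd i u) y) = 0\<close>])
  also have "\<dots> = exp (lam * u y) * (\<Sum>i\<in>UNIV. lam * (pd i u y)^2 * (f y)^2
      + pd i (pd i u) y * (f y)^2 + 2 * pd i u y * f y * pd i f y)"
    by (simp add: sum_distrib_left)
  finally show ?thesis .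
qed

lemma weighted_flux_has_derivative:
  fixes u f :: "real^'n::finite \<Rightarrow> real"
  assumes u: "Ck 2 S u" and f: "Ck 1 UNIV f" and y: "y \<in> S"
  shows "((\<lambda>t. exp (lam * u (y + t *\<^sub>R axis i 1)) * pd i u (y + t *\<^sub>R axis i 1) * (f (y + t *\<^sub>R axis i 1))^2)
    has_real_derivative exp (lam * u y) * (lam * (pd i u y)^2 * (f y)^2 + pd i (pd i u) y * (f y)^2
      + 2 * pd i u y * f y * pd i f y)) (at 0)"
proof -
  have "Ck 1 S (pd i u)"
    using u by (simp add: numeral_2_eq_2)
  then have du: "((\<lambda>t. u (y + t *\<^sub>R axis i 1)) has_real_derivative pd i u y) (at 0)"
    and dpu: "((\<lambda>t. pd i u (y + t *\<^sub>R axis i 1)) has_real_derivative pd i (pd i u) y) (at 0)"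
    and df: "((\<lambda>t. f (y + t *\<^sub>R axis i 1)) has_real_derivative pd i f y) (at 0)"
    using u f y by (auto simp: numeral_2_eq_2 intro!: line_has_derivative_pd)
  show ?thesis
    by (rule derivative_eq_intros du dpu df refl | simp)+ (simp add: algebra_simps power2_eq_square)
qed

lemma integral_weighted_divergence_eq_0:
  fixes u f :: "real^'n::finite \<Rightarrow> real" and lam :: real
  assumes S: "open S" and C: "compact C" "C \<subseteq> S"
    and u: "Ck 2 S u" and f: "Ck 1 UNIV f" and fsupp: "\<And>x. x \<notin> C \<Longrightarrow> f x = 0"
  defines "D \<equiv> \<lambda>y. if y \<in> S then exp (lam * u y) * (\<Sum>i\<in>UNIV. lam * (pd i u y)^2 * (f y)^2
      + pd i (pd i u) y * (f y)^2 + 2 * pd i u y * f y * pd i f y) else 0"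
  shows "integrable lborel D" and "integral\<^sup>L lborel D = 0"
proof -
  define divf where "divf i y = exp (lam * u y) * (lam * (pd i u y)^2 * (f y)^2
      + pd i (pd i u) y * (f y)^2 + 2 * pd i u y * f y * pd i f y)" for i y
  define flux where "flux i y = exp (lam * u y) * pd i u y * (f y)^2" for i y
  have "((\<lambda>t. flux i (y + t *\<^sub>R axis i 1)) has_real_derivative divf i y) (at 0)" if "y \<in> S" for i y
    unfolding flux_def divf_def by (rule weighted_flux_has_derivative[OF u f that])
  moreover have "continuous_on S (flux i)" "continuous_on S (divf i)" for i
    unfolding flux_def[abs_def] divf_def[abs_def] using Ck_2_continuous[OF u] Ck_1_UNIV_continuous[OF f]
    by (auto intro!: continuous_intros)
  moreover have "flux i y = 0" if "y \<notin> C" for i y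
    using that by (simp add: flux_def fsupp)
  ultimately have "integrable lborel (\<lambda>y. if y \<in> S then divf i y else 0)"
    "integral\<^sup>L lborel (\<lambda>y. if y \<in> S then divf i y else 0) = 0" for i
    using integral_pd_extend_by_zero[OF S C] by blast+
  moreover have "D = (\<lambda>y. \<Sum>i\<in>UNIV. if y \<in> S then divf i y else 0)"
    by (auto simp: D_def divf_def sum_distrib_left)
  ultimately show "integrable lborel D" "integral\<^sup>L lborel D = 0"
    by simp_all
qed

lemma weighted_hardy_harmonic:
  fixes u f :: "real^'n::finite \<Rightarrow> real" and lam :: real
  assumes S: "open S" and C: "compact C" "C \<subseteq> S"
    and u: "Ck 2 S u" and harm: "\<And>x. x \<in> S \<Longrightarrow> laplacian u x = 0"
    and f: "Ck 1 UNIV f" and fsupp: "\<And>x. x \<notin> C \<Longrightarrow> f x = 0"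
    and lam: "lam > 0"
  shows "ennreal ((lam / 2)^2) * (\<integral>\<^sup>+x. ennreal (exp (lam * u x) * (f x)^2 * (\<Sum>i\<in>UNIV. (pd i u x)^2)) \<partial>lebesgue_on S)
    \<le> (\<integral>\<^sup>+x. ennreal (exp (lam * u x) * (\<Sum>i\<in>UNIV. (pd i f x)^2)) \<partial>lebesgue_on S)"
proof -
  define F1 where "F1 y = (if y \<in> S then exp (lam * u y) * (f y)^2 * (\<Sum>i\<in>UNIV. (pd i u y)^2) else 0)" for y
  define F2 where "F2 y = (if y \<in> S then exp (lam * u y) * (\<Sum>i\<in>UNIV. (pd i f y)^2) else 0)" for y
  define D where "D y = (if y \<in> S then exp (lam * u y) * (\<Sum>i\<in>UNIV. lam * (pd i u y)^2 * (f y)^2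
      + pd i (pd i u) y * (f y)^2 + 2 * pd i u y * f y * pd i f y) else 0)" for y
  have pdf0: "pd i f y = 0" if "y \<notin> C" for i y
    using C(1) that fsupp by (intro pd_eq_0_outside) (auto simp: compact_imp_closed)
  have int_F1: "integrable lborel F1"
    using Ck_2_continuous[OF u] Ck_1_UNIV_continuous[OF f]
    by (intro integrable_continuous_compact_support[OF _ C(1)] continuous_on_extend_by_zero[OF S C,
          where G="\<lambda>y. exp (lam * u y) * (f y)^2 * (\<Sum>i\<in>UNIV. (pd i u y)^2)"])
      (auto simp: F1_def fsupp intro!: continuous_intros)
  have int_F2: "integrable lborel F2"
    using Ck_2_continuous[OF u] Ck_1_UNIV_continuous[OF f]
    by (intro integrable_continuous_compact_support[OF _ C(1)] continuous_on_extend_by_zero[OF S C,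
          where G="\<lambda>y. exp (lam * u y) * (\<Sum>i\<in>UNIV. (pd i f y)^2)"])
      (auto simp: F2_def pdf0 intro!: continuous_intros)
  have D: "integrable lborel D" "integral\<^sup>L lborel D = 0"
    using integral_weighted_divergence_eq_0[OF S C u f fsupp, of lam] by (simp_all add: D_def[abs_def])
  have "lam / 2 * F1 y - 2 / lam * F2 y \<le> D y" for y
    using hardy_integrand_le_divergence[OF lam harm, of y] by (simp add: F1_def F2_def D_def)
  then have "integral\<^sup>L lborel (\<lambda>y. lam / 2 * F1 y - 2 / lam * F2 y) \<le> integral\<^sup>L lborel D"
    using int_F1 int_F2 D(1) by (intro integral_mono) auto
  then have "lam / 2 * integral\<^sup>L lborel F1 - 2 / lam * integral\<^sup>L lborel F2 \<le> 0"
    using int_F1 int_F2 D(2) by simp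
  then have "lam / 2 * (lam / 2 * integral\<^sup>L lborel F1 - 2 / lam * integral\<^sup>L lborel F2) \<le> 0"
    using lam by (intro mult_nonneg_nonpos) auto
  moreover have "lam / 2 * (lam / 2 * integral\<^sup>L lborel F1 - 2 / lam * integral\<^sup>L lborel F2)
      = (lam / 2)^2 * integral\<^sup>L lborel F1 - integral\<^sup>L lborel F2"
    using lam by (simp add: field_simps power2_eq_square)
  ultimately have "(lam / 2)^2 * integral\<^sup>L lborel F1 \<le> integral\<^sup>L lborel F2"
    by simp
  moreover have "(\<integral>\<^sup>+x. ennreal (exp (lam * u x) * (f x)^2 * (\<Sum>i\<in>UNIV. (pd i u x)^2)) \<partial>lebesgue_on S)
      = ennreal (integral\<^sup>L lborel F1)"
    by (rule nn_integral_lebesgue_on_eq_lborel_integral[OF S _ _ _ int_F1]) (auto simp: F1_def sum_nonneg)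
  moreover have "(\<integral>\<^sup>+x. ennreal (exp (lam * u x) * (\<Sum>i\<in>UNIV. (pd i f x)^2)) \<partial>lebesgue_on S)
      = ennreal (integral\<^sup>L lborel F2)"
    by (rule nn_integral_lebesgue_on_eq_lborel_integral[OF S _ _ _ int_F2]) (auto simp: F2_def sum_nonneg)
  moreover have "integral\<^sup>L lborel F1 \<ge> 0"
    by (intro integral_nonneg_AE) (simp add: F1_def sum_nonneg)
  ultimately show ?thesis
    by (simp add: ennreal_mult[symmetric] ennreal_leI)
qed

lemma weighted_hardy_harmonic_ge_2:
  fixes u f :: "real^'n::finite \<Rightarrow> real" and lam :: real
  assumes S: "open S" and C: "compact C" "C \<subseteq> S"
    and u: "Ck 2 S u" and harm: "\<And>x. x \<in> S \<Longrightarrow> laplacian u x = 0"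
    and f: "Ck 1 UNIV f" and fsupp: "\<And>x. x \<notin> C \<Longrightarrow> f x = 0"
    and lam: "lam \<ge> 2"
  shows "(\<integral>\<^sup>+x. ennreal (exp (lam * u x) * (f x)^2 * (\<Sum>i\<in>UNIV. (pd i u x)^2)) \<partial>lebesgue_on S)
    \<le> (\<integral>\<^sup>+x. ennreal (exp (lam * u x) * (\<Sum>i\<in>UNIV. (pd i f x)^2)) \<partial>lebesgue_on S)"
proof -
  have "(1::ennreal) \<le> ennreal ((lam / 2)^2)"
    using lam by (simp add: one_le_power)
  then have "(\<integral>\<^sup>+x. ennreal (exp (lam * u x) * (f x)^2 * (\<Sum>i\<in>UNIV. (pd i u x)^2)) \<partial>lebesgue_on S)
      \<le> ennreal ((lam / 2)^2) * (\<integral>\<^sup>+x. ennreal (exp (lam * u x) * (f x)^2 * (\<Sum>i\<in>UNIV. (pd i u x)^2)) \<partial>lebesgue_on S)"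
    using mult_right_mono[of 1] by fastforce
  also have "\<dots> \<le> (\<integral>\<^sup>+x. ennreal (exp (lam * u x) * (\<Sum>i\<in>UNIV. (pd i f x)^2)) \<partial>lebesgue_on S)"
    using lam by (intro weighted_hardy_harmonic[OF S C u harm f fsupp]) auto
  finally show ?thesis .
qed

section \<open>Test maps and the space \<open>H10\<close>\<close>

lemma qlin_line_has_derivative:
  fixes w :: "real^'n::finite \<Rightarrow> nat \<Rightarrow> real"
  assumes "\<And>k. (\<lambda>t. w (x + t *\<^sub>R axis i 1) k) differentiable (at 0)"
  shows "((\<lambda>t. qlin K l c j (w (x + t *\<^sub>R axis i 1))) has_real_derivative
    qlin K l c j (\<lambda>k. pd i (\<lambda>z. w z k) x)) (at 0)"
  unfolding qlin_def
  by (intro DERIV_sum DERIV_cmult line_has_derivative_pd[of "\<lambda>z. w z _", OF assms])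

lemma Ck_1_qlin:
  fixes w :: "real^'n::finite \<Rightarrow> nat \<Rightarrow> real"
  assumes w: "\<And>k. Ck 1 UNIV (\<lambda>x. w x k)"
  shows "Ck 1 UNIV (\<lambda>x. qlin K l c j (w x))"
    and "pd i (\<lambda>x. qlin K l c j (w x)) x = qlin K l c j (\<lambda>k. pd i (\<lambda>z. w z k) x)"
proof -
  have diff: "(\<lambda>t. w (x + t *\<^sub>R axis i 1) k) differentiable (at 0)" for x i k
    using w[of k] by auto
  show pd_qlin: "pd i (\<lambda>x. qlin K l c j (w x)) x = qlin K l c j (\<lambda>k. pd i (\<lambda>z. w z k) x)" for x i
    by (rule pd_eqI[OF qlin_line_has_derivative[where w=w, OF diff]])
  have cont: "continuous_on UNIV (\<lambda>x. w x k)" "continuous_on UNIV (pd i (\<lambda>x. w x k))" for i k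
    using w[of k] by auto
  have "(\<lambda>t. qlin K l c j (w (x + t *\<^sub>R axis i 1))) differentiable (at 0)" for x i
    using qlin_line_has_derivative[where w=w, OF diff] real_differentiable_def by blast
  moreover have "continuous_on UNIV (pd i (\<lambda>x. qlin K l c j (w x)))" for i
  proof -
    have "pd i (\<lambda>x. qlin K l c j (w x)) = (\<lambda>x. qlin K l c j (\<lambda>k. pd i (\<lambda>z. w z k) x))"
      by (rule ext, rule pd_qlin)
    then show ?thesis
      unfolding qlin_def by (simp add: continuous_intros cont)
  qed
  moreover have "continuous_on UNIV (\<lambda>x. qlin K l c j (w x))"
    unfolding qlin_def by (intro continuous_intros cont)
  ultimately show "Ck 1 UNIV (\<lambda>x. qlin K l c j (w x))"
    by simp
qed

lemma nn_integral_sum_ennreal: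
  assumes "\<And>j. j \<in> A \<Longrightarrow> g j \<in> borel_measurable M" and "\<And>j x. j \<in> A \<Longrightarrow> g j x \<ge> 0"
  shows "(\<integral>\<^sup>+x. ennreal (\<Sum>j\<in>A. g j x) \<partial>M) = (\<Sum>j\<in>A. \<integral>\<^sup>+x. ennreal (g j x) \<partial>M)"
proof -
  have "(\<integral>\<^sup>+x. ennreal (\<Sum>j\<in>A. g j x) \<partial>M) = (\<integral>\<^sup>+x. (\<Sum>j\<in>A. ennreal (g j x)) \<partial>M)"
    using assms(2) by (simp add: sum_ennreal)
  also have "\<dots> = (\<Sum>j\<in>A. \<integral>\<^sup>+x. ennreal (g j x) \<partial>M)"
    using assms(1) by (intro nn_integral_sum) simp
  finally show ?thesis .
qed

lemma nn_integral_lincomb: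
  assumes [measurable]: "f \<in> borel_measurable M" "g \<in> borel_measurable M"
    and "\<And>x. f x \<ge> 0" "\<And>x. g x \<ge> 0" "a \<ge> 0" "b \<ge> 0"
  shows "(\<integral>\<^sup>+x. ennreal (a * f x + b * g x) \<partial>M)
    = ennreal a * (\<integral>\<^sup>+x. ennreal (f x) \<partial>M) + ennreal b * (\<integral>\<^sup>+x. ennreal (g x) \<partial>M)"
proof -
  have "(\<integral>\<^sup>+x. ennreal (a * f x + b * g x) \<partial>M) = (\<integral>\<^sup>+x. ennreal a * ennreal (f x) + ennreal b * ennreal (g x) \<partial>M)"
    using assms(3-) by (intro nn_integral_cong) (simp add: ennreal_plus ennreal_mult)
  also have "\<dots> = ennreal a * (\<integral>\<^sup>+x. ennreal (f x) \<partial>M) + ennreal b * (\<integral>\<^sup>+x. ennreal (g x) \<partial>M)"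
    by (simp add: nn_integral_add nn_integral_cmult)
  finally show ?thesis .
qed

lemma ennreal_le_of_le_one_plus_eps_sq:
  fixes x y :: ennreal
  assumes le: "\<And>e. e > 0 \<Longrightarrow> x \<le> ennreal ((1 + e)^2) * y"
  shows "x \<le> y"
proof (cases y rule: ennreal_cases)
  case (real r)
  have "(\<lambda>k. ennreal ((1 + inverse (real (Suc k)))^2 * r)) \<longlonglongrightarrow> ennreal ((1 + 0)^2 * r)"
    by (intro tendsto_ennrealI tendsto_intros LIMSEQ_inverse_real_of_nat)
  moreover have "\<forall>k. x \<le> ennreal ((1 + inverse (real (Suc k)))^2 * r)"
    using le real by (simp add: ennreal_mult)
  ultimately show ?thesis
    using real LIMSEQ_le_const[of _ "ennreal r" x] by force
qed simp

lemma nn_integral_eq_SUP_truncation: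
  fixes f g :: "'a \<Rightarrow> real"
  assumes [measurable]: "f \<in> borel_measurable M" "g \<in> borel_measurable M" and nonneg: "\<And>x. f x \<ge> 0"
  shows "(\<integral>\<^sup>+x. ennreal (f x) \<partial>M) = (SUP n. \<integral>\<^sup>+x. ennreal (if g x \<le> real n then f x else 0) \<partial>M)"
proof -
  define t where "t n x = ennreal (if g x \<le> real n then f x else 0)" for n :: nat and x
  have "incseq t"
    using nonneg by (auto simp: t_def incseq_SucI le_fun_def intro!: ennreal_leI)
  have t_meas: "t n \<in> borel_measurable M" for n
    unfolding t_def by measurable
  have "ennreal (f x) = (SUP n. t n x)" for x
  proof (rule antisym)
    obtain n :: nat where "g x \<le> real n"
      using real_arch_simple by blast
    then show "ennreal (f x) \<le> (SUP n. t n x)"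
      by (intro SUP_upper2[of n]) (auto simp: t_def)
    show "(SUP n. t n x) \<le> ennreal (f x)"
      using nonneg by (auto simp: t_def intro!: SUP_least ennreal_leI)
  qed
  then have "(\<integral>\<^sup>+x. ennreal (f x) \<partial>M) = (\<integral>\<^sup>+x. (SUP n. t n x) \<partial>M)"
    by simp
  also have "\<dots> = (SUP n. integral\<^sup>N M (t n))"
    by (rule nn_integral_monotone_convergence_SUP[OF \<open>incseq t\<close> t_meas])
  finally show ?thesis
    by (simp add: t_def[abs_def])
qed

lemma hardy_Qf_test_map:
  fixes u :: "real^'n::finite \<Rightarrow> real" and w :: "real^'n \<Rightarrow> nat \<Rightarrow> real"
  assumes l: "l \<ge> 2" and S: "open S" and C: "compact C" "C \<subseteq> S"
    and u: "Ck 2 S u" and harm: "\<And>x. x \<in> S \<Longrightarrow> laplacian u x = 0"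
    and w: "\<And>k. Ck 1 UNIV (\<lambda>x. w x k)" and wsupp: "\<And>x. x \<notin> C \<Longrightarrow> w x = (\<lambda>k. 0)"
  shows "(\<integral>\<^sup>+x. ennreal (Qf K l (gam c (u x)) (w x) * (\<Sum>i\<in>UNIV. (pd i u x)^2)) \<partial>lebesgue_on S)
    \<le> (\<integral>\<^sup>+x. ennreal (Qgrad K l (\<lambda>x. gam c (u x)) (\<lambda>y i k. pd i (\<lambda>z. w z k) y) x) \<partial>lebesgue_on S)"
proof -
  let ?A = "{1..mdim K l - 1}"
  let ?N = "\<lambda>x. \<Sum>i\<in>UNIV. (pd i u x)^2"
  define f where "f j x = qlin K l c j (w x)" for j x
  have f: "Ck 1 UNIV (f j)" and pd_f: "pd i (f j) x = qlin K l c j (\<lambda>k. pd i (\<lambda>z. w z k) x)" for j i x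
    using Ck_1_qlin[OF w] by (simp_all add: f_def[abs_def])
  have fsupp: "f j x = 0" if "x \<notin> C" for j x
    using wsupp[OF that] by (simp add: f_def qlin_def)
  have Sl: "S \<in> sets lebesgue"
    using S by simp
  have "continuous_on S (\<lambda>x. exp (qexp K j * u x) * (f j x)^2 * ?N x)"
    "continuous_on S (\<lambda>x. exp (qexp K j * u x) * (\<Sum>i\<in>UNIV. (pd i (f j) x)^2))" for j
    using Ck_2_continuous[OF u] Ck_1_UNIV_continuous[OF f] by (auto intro!: continuous_intros)
  note meas = this[THEN continuous_imp_measurable_on_sets_lebesgue[OF _ Sl]]
  have "(\<integral>\<^sup>+x. ennreal (exp (qexp K j * u x) * (f j x)^2 * ?N x) \<partial>lebesgue_on S)
      \<le> (\<integral>\<^sup>+x. ennreal (exp (qexp K j * u x) * (\<Sum>i\<in>UNIV. (pd i (f j) x)^2)) \<partial>lebesgue_on S)" for j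
    by (rule weighted_hardy_harmonic_ge_2[OF S C u harm f fsupp qexp_ge_2])
  then have "(\<Sum>j\<in>?A. \<integral>\<^sup>+x. ennreal (exp (qexp K j * u x) * (f j x)^2 * ?N x) \<partial>lebesgue_on S)
      \<le> (\<Sum>j\<in>?A. \<integral>\<^sup>+x. ennreal (exp (qexp K j * u x) * (\<Sum>i\<in>UNIV. (pd i (f j) x)^2)) \<partial>lebesgue_on S)"
    by (rule sum_mono)
  moreover have "Qf K l (gam c (u x)) (w x) * ?N x = (\<Sum>j\<in>?A. exp (qexp K j * u x) * (f j x)^2 * ?N x)" for x
    by (simp add: Qf_gam_eq_sum[OF l] f_def sum_distrib_right)
  moreover have "Qgrad K l (\<lambda>x. gam c (u x)) (\<lambda>y i k. pd i (\<lambda>z. w z k) y) x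
      = (\<Sum>j\<in>?A. exp (qexp K j * u x) * (\<Sum>i\<in>UNIV. (pd i (f j) x)^2))" for x
    by (simp add: Qgrad_def Qf_gam_eq_sum[OF l] pd_f sum_distrib_left sum.swap[of _ UNIV])
  ultimately show ?thesis
    using meas by (simp add: nn_integral_sum_ennreal sum_nonneg)
qed

lemma hardy_Qf_truncated:
  fixes u :: "real^'n::finite \<Rightarrow> real" and v w :: "real^'n \<Rightarrow> nat \<Rightarrow> real"
    and G :: "real^'n \<Rightarrow> 'n \<Rightarrow> nat \<Rightarrow> real"
  assumes l: "l \<ge> 2" and S: "open S" and u: "Ck 2 S u" and harm: "\<And>x. x \<in> S \<Longrightarrow> laplacian u x = 0"
    and v: "\<And>k. (\<lambda>x. v x k) \<in> borel_measurable (lebesgue_on S)"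
    and G: "\<And>i k. (\<lambda>x. G x i k) \<in> borel_measurable (lebesgue_on S)"
    and w: "Cc_inf K l S w" and e: "e > 0" and M: "M \<ge> 0"
  shows "(\<integral>\<^sup>+x. ennreal (if (\<Sum>i\<in>UNIV. (pd i u x)^2) * Qbound K l c (u x) \<le> M
            then Qf K l (gam c (u x)) (v x) * (\<Sum>i\<in>UNIV. (pd i u x)^2) else 0) \<partial>lebesgue_on S)
    \<le> ennreal (1 + e) * (ennreal (1 + e) * (\<integral>\<^sup>+x. ennreal (Qgrad K l (\<lambda>x. gam c (u x)) G x) \<partial>lebesgue_on S)
        + ennreal (1 + 1/e) * (\<integral>\<^sup>+x. ennreal (Qgrad K l (\<lambda>x. gam c (u x))
            (\<lambda>y i k. pd i (\<lambda>z. w z k) y - G y i k) x) \<partial>lebesgue_on S))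
      + ennreal ((1 + 1/e) * M) * (\<integral>\<^sup>+x. ennreal (sqn K l (\<lambda>k. w x k - v x k)) \<partial>lebesgue_on S)"
proof -
  let ?N = "\<lambda>x. \<Sum>i\<in>UNIV. (pd i u x)^2"
  let ?Qg = "Qgrad K l (\<lambda>x. gam c (u x))"
  let ?L = "lebesgue_on S"
  obtain C where C: "compact C" "C \<subseteq> S" and wsupp: "\<And>x. x \<notin> C \<Longrightarrow> w x = (\<lambda>k. 0)"
    using w unfolding Cc_inf_def by blast
  have w1: "Ck 1 UNIV (\<lambda>x. w x k)" for k
    using w unfolding Cc_inf_def by (blast intro: Cinf_imp_Ck)
  have Sl: "S \<in> sets lebesgue"
    using S by simp
  have [measurable]: "u \<in> borel_measurable ?L" "pd i u \<in> borel_measurable ?L" for i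
    using Ck_2_continuous[OF u] by (auto intro: continuous_imp_measurable_on_sets_lebesgue[OF _ Sl])
  have [measurable]: "(\<lambda>x. w x k) \<in> borel_measurable ?L"
    "(\<lambda>x. pd i (\<lambda>z. w z k) x) \<in> borel_measurable ?L" for i k
    using Ck_1_UNIV_continuous[OF w1]
    by (auto intro: continuous_imp_measurable_on_sets_lebesgue[OF _ Sl])
  have [measurable]: "(\<lambda>x. v x k) \<in> borel_measurable ?L" "(\<lambda>x. G x i k) \<in> borel_measurable ?L" for i k
    using v G by auto
  note [measurable] = borel_measurable_Qf_gam[OF l] borel_measurable_sqn
  have nonneg: "?N x \<ge> 0" "Qf K l (gam c (u x)) \<zeta> \<ge> 0" "?Qg H x \<ge> 0" "sqn K l \<zeta> \<ge> 0" for x \<zeta> H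
    using l by (simp_all add: sum_nonneg Qf_gam_nonneg Qgrad_gam_nonneg sqn_nonneg)
  have "(\<integral>\<^sup>+x. ennreal (if ?N x * Qbound K l c (u x) \<le> M then Qf K l (gam c (u x)) (v x) * ?N x else 0) \<partial>?L)
      \<le> (\<integral>\<^sup>+x. ennreal ((1 + e) * (Qf K l (gam c (u x)) (w x) * ?N x)
          + ((1 + 1/e) * M) * sqn K l (\<lambda>k. w x k - v x k)) \<partial>?L)"
    using Qf_gam_truncated_le[OF l e nonneg(1) M]
    by (intro nn_integral_mono ennreal_leI) (simp add: mult.assoc)
  also have "\<dots> = ennreal (1 + e) * (\<integral>\<^sup>+x. ennreal (Qf K l (gam c (u x)) (w x) * ?N x) \<partial>?L)
      + ennreal ((1 + 1/e) * M) * (\<integral>\<^sup>+x. ennreal (sqn K l (\<lambda>k. w x k - v x k)) \<partial>?L)"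
    using e M nonneg by (intro nn_integral_lincomb) (auto simp: Qgrad_def)
  also have "(\<integral>\<^sup>+x. ennreal (Qf K l (gam c (u x)) (w x) * ?N x) \<partial>?L)
      \<le> (\<integral>\<^sup>+x. ennreal (?Qg (\<lambda>y i k. pd i (\<lambda>z. w z k) y) x) \<partial>?L)"
    by (rule hardy_Qf_test_map[OF l S C u harm w1 wsupp])
  also have "\<dots> \<le> (\<integral>\<^sup>+x. ennreal ((1 + e) * ?Qg G x
      + (1 + 1/e) * ?Qg (\<lambda>y i k. pd i (\<lambda>z. w z k) y - G y i k) x) \<partial>?L)"
    by (intro nn_integral_mono ennreal_leI Qgrad_gam_le_split l e)
  also have "\<dots> = ennreal (1 + e) * (\<integral>\<^sup>+x. ennreal (?Qg G x) \<partial>?L)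
      + ennreal (1 + 1/e) * (\<integral>\<^sup>+x. ennreal (?Qg (\<lambda>y i k. pd i (\<lambda>z. w z k) y - G y i k) x) \<partial>?L)"
    using e nonneg by (intro nn_integral_lincomb) (auto simp: Qgrad_def)
  finally show ?thesis
    by (simp add: mult_left_mono add_mono)
qed

lemma hardy_Qf_approx:
  fixes u :: "real^'n::finite \<Rightarrow> real" and v :: "real^'n \<Rightarrow> nat \<Rightarrow> real"
    and G :: "real^'n \<Rightarrow> 'n \<Rightarrow> nat \<Rightarrow> real"
  assumes l: "l \<ge> 2" and S: "open S" and u: "Ck 2 S u" and harm: "\<And>x. x \<in> S \<Longrightarrow> laplacian u x = 0"
    and v: "\<And>k. (\<lambda>x. v x k) \<in> borel_measurable (lebesgue_on S)"
    and G: "\<And>i k. (\<lambda>x. G x i k) \<in> borel_measurable (lebesgue_on S)"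
    and approx: "\<exists>w. (\<forall>j. Cc_inf K l S (w j)) \<and>
        (\<lambda>j. \<integral>\<^sup>+x. ennreal (sqn K l (\<lambda>k. w j x k - v x k)
              + Qgrad K l (\<lambda>x. gam c (u x)) (\<lambda>y i k. pd i (\<lambda>z. w j z k) y - G y i k) x) \<partial>lebesgue_on S)
          \<longlonglongrightarrow> 0"
  shows "(\<integral>\<^sup>+x. ennreal (Qf K l (gam c (u x)) (v x) * (\<Sum>i\<in>UNIV. (pd i u x)^2)) \<partial>lebesgue_on S)
    \<le> (\<integral>\<^sup>+x. ennreal (Qgrad K l (\<lambda>x. gam c (u x)) G x) \<partial>lebesgue_on S)"
proof -
  let ?N = "\<lambda>x. \<Sum>i\<in>UNIV. (pd i u x)^2"
  let ?Qg = "Qgrad K l (\<lambda>x. gam c (u x))"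
  let ?L = "lebesgue_on S"
  let ?Y = "\<integral>\<^sup>+x. ennreal (?Qg G x) \<partial>?L"
  obtain w where w: "\<And>j. Cc_inf K l S (w j)"
    and lim: "(\<lambda>j. \<integral>\<^sup>+x. ennreal (sqn K l (\<lambda>k. w j x k - v x k)
              + ?Qg (\<lambda>y i k. pd i (\<lambda>z. w j z k) y - G y i k) x) \<partial>?L) \<longlonglongrightarrow> 0"
    using approx by blast
  define a where "a j = (\<integral>\<^sup>+x. ennreal (sqn K l (\<lambda>k. w j x k - v x k)) \<partial>?L)" for j
  define b where "b j = (\<integral>\<^sup>+x. ennreal (?Qg (\<lambda>y i k. pd i (\<lambda>z. w j z k) y - G y i k) x) \<partial>?L)" for j
  have "a \<longlonglongrightarrow> 0" "b \<longlonglongrightarrow> 0"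
    using l by (auto simp: a_def b_def sqn_nonneg Qgrad_gam_nonneg
        intro!: tendsto_sandwich[OF _ _ tendsto_const lim] always_eventually nn_integral_mono ennreal_leI)
  then have lim_bound: "(\<lambda>j. ennreal (1 + e) * (ennreal (1 + e) * ?Y + ennreal (1 + 1/e) * b j)
      + ennreal ((1 + 1/e) * M) * a j) \<longlonglongrightarrow> ennreal ((1 + e)^2) * ?Y" if "e > 0" for e M
    using that
    by (auto intro!: tendsto_eq_intros ennreal_tendsto_cmult simp: ennreal_mult power2_eq_square mult.assoc)
  \<comment> \<open>Truncating where the weight is large lets the unweighted \<open>L\<^sup>2\<close> convergence of the \<open>w j\<close> be used.\<close>
  have trunc_le: "(\<integral>\<^sup>+x. ennreal (if ?N x * Qbound K l c (u x) \<le> real M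
      then Qf K l (gam c (u x)) (v x) * ?N x else 0) \<partial>?L) \<le> ?Y" for M :: nat
  proof (rule ennreal_le_of_le_one_plus_eps_sq)
    fix e :: real assume e: "e > 0"
    have "(\<integral>\<^sup>+x. ennreal (if ?N x * Qbound K l c (u x) \<le> real M
        then Qf K l (gam c (u x)) (v x) * ?N x else 0) \<partial>?L)
      \<le> ennreal (1 + e) * (ennreal (1 + e) * ?Y + ennreal (1 + 1/e) * b j)
        + ennreal ((1 + 1/e) * real M) * a j" for j
      unfolding a_def b_def by (rule hardy_Qf_truncated[OF l S u harm v G w[of j] e]) auto
    then show "(\<integral>\<^sup>+x. ennreal (if ?N x * Qbound K l c (u x) \<le> real M
        then Qf K l (gam c (u x)) (v x) * ?N x else 0) \<partial>?L) \<le> ennreal ((1 + e)^2) * ?Y"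
      by (intro LIMSEQ_le_const[OF lim_bound[OF e]]) auto
  qed
  have Sl: "S \<in> sets lebesgue"
    using S by simp
  have [measurable]: "u \<in> borel_measurable ?L" "pd i u \<in> borel_measurable ?L" "(\<lambda>x. v x k) \<in> borel_measurable ?L"
    for i k
    using Ck_2_continuous[OF u] v by (auto intro: continuous_imp_measurable_on_sets_lebesgue[OF _ Sl])
  have "(\<lambda>x. Qf K l (gam c (u x)) (v x) * ?N x) \<in> borel_measurable ?L"
    using borel_measurable_Qf_gam[OF l] by measurable
  moreover have "(\<lambda>x. ?N x * Qbound K l c (u x)) \<in> borel_measurable ?L"
    unfolding Qbound_def by measurable
  ultimately have "(\<integral>\<^sup>+x. ennreal (Qf K l (gam c (u x)) (v x) * ?N x) \<partial>?L)
      = (SUP M. \<integral>\<^sup>+x. ennreal (if ?N x * Qbound K l c (u x) \<le> real M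
          then Qf K l (gam c (u x)) (v x) * ?N x else 0) \<partial>?L)"
    using l by (intro nn_integral_eq_SUP_truncation) (simp_all add: Qf_gam_nonneg sum_nonneg)
  also have "\<dots> \<le> ?Y"
    by (rule SUP_least) (rule trunc_le)
  finally show ?thesis .
qed

lemma harmonic_map_gam:
  assumes l: "l \<ge> 2" and harm: "harmonic_map K l S (\<lambda>x. gam c (u x))"
  shows "Ck 2 S u" and "x \<in> S \<Longrightarrow> laplacian u x = 0"
proof -
  have m: "0 < mdim K l"
    using dimK_less_mdim[OF l, of K] by linarith
  show "Ck 2 S u"
    using harm m by (auto simp: harmonic_map_def Cinf_def)
  assume x: "x \<in> S"
  have "dmap i (\<lambda>x. gam c (u x)) x j = 0" if "j \<noteq> 0" for i j
    using that by (simp add: dmap_def gam_def pd_def)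
  then have vanish:
    "Chr K l 0 j h (gam c (u x)) * dmap i (\<lambda>x. gam c (u x)) x j * dmap i (\<lambda>x. gam c (u x)) x h = 0"
    for i j h
    by (cases "j = 0 \<and> h = 0") (auto simp: Chr_0_0)
  have "(\<Sum>i\<in>UNIV. pd i (pd i (\<lambda>y. gam c (u y) 0)) x + (\<Sum>j<mdim K l. \<Sum>h<mdim K l.
      Chr K l 0 j h (gam c (u x)) * dmap i (\<lambda>x. gam c (u x)) x j * dmap i (\<lambda>x. gam c (u x)) x h)) = 0"
    using harm x m unfolding harmonic_map_def by blast
  then show "laplacian u x = 0"
    unfolding vanish by (simp add: laplacian_def)
qed

theorem lemma3p2:
  fixes \<Omega> \<Sigma> :: "(real^'n) set"
    and K :: field and l :: nat and a \<alpha> :: real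
    and c :: "nat \<Rightarrow> real" and u0 :: "real^'n \<Rightarrow> real"
    and v :: "real^'n \<Rightarrow> nat \<Rightarrow> real" and G :: "real^'n \<Rightarrow> 'n \<Rightarrow> nat \<Rightarrow> real"
  assumes n2: "CARD('n) \<ge> 2"
    and dom: "open \<Omega>" "connected \<Omega>" "bounded \<Omega>" "\<Omega> \<noteq> {}"
    and alpha: "0 < \<alpha>" "\<alpha> < 1"
    and bdry: "C2alpha_boundary \<alpha> \<Omega>"
    and Sig: "closed_smooth_submanifold_codim2 \<Sigma> \<Omega>"
    and l2: "l \<ge> 2"
    and apos: "a > 0"
    and curv: "\<And>p X Y. in_coords K l p \<Longrightarrow> in_coords K l X \<Longrightarrow> in_coords K l Y \<Longrightarrow>
                 gmet K l p X X * gmet K l p Y Y - (gmet K l p X Y)^2 \<noteq> 0 \<Longrightarrow>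
                 sec K l p X Y \<le> - (a^2)"
    and c: "in_Rm1 K l c"
    and sing: "sigma_singular K l \<alpha> \<Omega> \<Sigma> c u0"
    and vH: "H10 K l \<Omega> \<Sigma> (\<lambda>x. gam c (u0 x)) v G"
  shows "(\<integral>\<^sup>+x. ennreal (Qf K l (gam c (u0 x)) (v x) * (\<Sum>i\<in>UNIV. (pd i u0 x)^2)) \<partial>lebesgue_on (\<Omega> - \<Sigma>))
         \<le> ennreal (1 / a^2) * (\<integral>\<^sup>+x. ennreal (Qgrad K l (\<lambda>x. gam c (u0 x)) G x) \<partial>lebesgue_on (\<Omega> - \<Sigma>))"
proof -
  let ?S = "\<Omega> - \<Sigma>"
  have S: "open ?S"
    using dom(1) Sig by (auto simp: closed_smooth_submanifold_codim2_def intro: compact_imp_closed)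
  have "harmonic_map K l ?S (\<lambda>x. gam c (u0 x))"
    using sing by (simp add: sigma_singular_def Let_def)
  note u0 = harmonic_map_gam[OF l2 this]
  have "(\<integral>\<^sup>+x. ennreal (Qf K l (gam c (u0 x)) (v x) * (\<Sum>i\<in>UNIV. (pd i u0 x)^2)) \<partial>lebesgue_on ?S)
      \<le> (\<integral>\<^sup>+x. ennreal (Qgrad K l (\<lambda>x. gam c (u0 x)) G x) \<partial>lebesgue_on ?S)"
    using vH unfolding H10_def by (intro hardy_Qf_approx[OF l2 S u0]) auto
  also have "\<dots> \<le> ennreal (1 / a^2) * (\<integral>\<^sup>+x. ennreal (Qgrad K l (\<lambda>x. gam c (u0 x)) G x) \<partial>lebesgue_on ?S)"
  proof -
    have "1 \<le> 1 / a^2"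
      using sec_bound_imp_sq_le_1[OF l2 curv] apos by simp
    then show ?thesis
      using mult_right_mono[of 1 "ennreal (1 / a^2)"] by (simp add: ennreal_leI)
  qed
  finally show ?thesis .
qed

end
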